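(* Let $a,b>0$ be linearly dependent over $\mathbb{Q}$. Then there is a smooth function $h$ with Taylor expansion at the origin of the form $h(x,y)=a^2x^2+b^2y^2+\sum_{m+n\ge3}h_{m,n}x^my^n$ such that the equation $z_x^2+z_y^2=h$ has no solution $z$ of the form $z(x,y)=\frac12(ax^2-by^2)+\sum_{m+n\ge3}z_{m,n}x^my^n$. In particular, if $m,n$ are positive integers with $ma-nb=0$ and $m+n\ge4$ and $c\ne0$, then for $h=a^2x^2+b^2y^2+cx^my^n$ the equation $z_x^2+z_y^2=h$ has no solution of that form in formal power series, and no such $C^k$ solution for $k\ge m+n$. *)

theory Defs
  imports "HOL-Analysis.Analysis"
begin

definition px :: "(real \<times> real \<Rightarrow> real) \<Rightarrow> real \<times> real \<Rightarrow> real" where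
  "px f = (\<lambda>(x, y). deriv (\<lambda>t. f (t, y)) x)"

definition py :: "(real \<times> real \<Rightarrow> real) \<Rightarrow> real \<times> real \<Rightarrow> real" where
  "py f = (\<lambda>(x, y). deriv (\<lambda>t. f (x, t)) y)"

fun Ck :: "nat \<Rightarrow> (real \<times> real \<Rightarrow> real) \<Rightarrow> (real \<times> real) set \<Rightarrow> bool" where
  "Ck 0 f S = continuous_on S f"
| "Ck (Suc k) f S = (f differentiable_on S \<and> Ck k (px f) S \<and> Ck k (py f) S)"

definition smooth_on :: "(real \<times> real \<Rightarrow> real) \<Rightarrow> (real \<times> real) set \<Rightarrow> bool" where
  "smooth_on f S = (\<forall>k. Ck k f S)"

definition taylor_coeff :: "(real \<times> real \<Rightarrow> real) \<Rightarrow> nat \<Rightarrow> nat \<Rightarrow> real" where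
  "taylor_coeff f m n = ((px ^^ m) ((py ^^ n) f)) (0, 0) / (fact m * fact n)"

text \<open>Formal power series in two variables as coefficient arrays.\<close>
definition conv2 :: "(nat \<Rightarrow> nat \<Rightarrow> real) \<Rightarrow> (nat \<Rightarrow> nat \<Rightarrow> real) \<Rightarrow> nat \<Rightarrow> nat \<Rightarrow> real" where
  "conv2 f g p q = (\<Sum>i\<le>p. \<Sum>j\<le>q. f i j * g (p - i) (q - j))"

definition fdx :: "(nat \<Rightarrow> nat \<Rightarrow> real) \<Rightarrow> nat \<Rightarrow> nat \<Rightarrow> real" where
  "fdx z i j = real (i + 1) * z (i + 1) j"

definition fdy :: "(nat \<Rightarrow> nat \<Rightarrow> real) \<Rightarrow> nat \<Rightarrow> nat \<Rightarrow> real" where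
  "fdy z i j = real (j + 1) * z i (j + 1)"

definition h_low :: "real \<Rightarrow> real \<Rightarrow> nat \<Rightarrow> nat \<Rightarrow> real" where
  "h_low a b i j = (if (i, j) = (2, 0) then a^2 else if (i, j) = (0, 2) then b^2 else 0)"

definition z_low :: "real \<Rightarrow> real \<Rightarrow> nat \<Rightarrow> nat \<Rightarrow> real" where
  "z_low a b i j = (if (i, j) = (2, 0) then a / 2 else if (i, j) = (0, 2) then - b / 2 else 0)"

end

(* Write P = z_x and Q = z_y. Differentiating z_x^2 + z_y^2 = h gives X P = h_x / 2 and
   X Q = h_y / 2 for the vector field X = P d/dx + Q d/dy, whose linear part diag(a, -b) is
   resonant because m a = n b. In the coordinates xi = P + a x ~ 2 a x and eta = Q - b y ~ -2 b y
   the field X acts on xi^i eta^j as multiplication by i a - j b up to higher order terms.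
   Expanding Q + b y in these monomials shows that X Q - b^2 y has no x^m y^(n-1) term, whereas
   for h = a^2 x^2 + b^2 y^2 + c x^m y^n that coefficient is n c / 2. For a C^k solution,
   k >= m + n, the same computation is carried out on Taylor coefficients at the origin; the one
   coefficient that lies beyond the smoothness of z is reached because z_x and z_y vanish there. *)

theory Submission
  imports Defs "HOL-Computational_Algebra.Formal_Power_Series"
begin

section \<open>Formal power series in two variables\<close>

text \<open>A series in \<open>x\<close> and \<open>y\<close> is a power series in \<open>y\<close> whose coefficients are power series
  in \<open>x\<close>; so \<^const>\<open>fps_deriv\<close> is the derivative in \<open>y\<close>.\<close>

type_synonym fps2 = "real fps fps"

definition coeff2 :: "fps2 \<Rightarrow> nat \<Rightarrow> nat \<Rightarrow> real" where
  "coeff2 F i j = fps_nth (fps_nth F j) i"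

definition fps2_of :: "(nat \<Rightarrow> nat \<Rightarrow> real) \<Rightarrow> fps2" where
  "fps2_of c = Abs_fps (\<lambda>j. Abs_fps (\<lambda>i. c i j))"

definition fps2_dx :: "fps2 \<Rightarrow> fps2" where
  "fps2_dx F = Abs_fps (\<lambda>j. fps_deriv (fps_nth F j))"

abbreviation fps2_dy :: "fps2 \<Rightarrow> fps2" where
  "fps2_dy \<equiv> fps_deriv"

definition fps2_const :: "real \<Rightarrow> fps2" where
  "fps2_const c = fps_const (fps_const c)"

definition fps2_X :: fps2 where
  "fps2_X = fps_const fps_X"

definition fps2_Y :: fps2 where
  "fps2_Y = fps_X"

lemma coeff2_fps2_of [simp]: "coeff2 (fps2_of c) i j = c i j"
  by (simp add: coeff2_def fps2_of_def)

lemma fps2_eqI: "(\<And>i j. coeff2 F i j = coeff2 G i j) \<Longrightarrow> F = G"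
  by (simp add: coeff2_def fps_ext)

lemma coeff2_fps2_dx [simp]: "coeff2 (fps2_dx F) i j = real (Suc i) * coeff2 F (Suc i) j"
  by (simp add: coeff2_def fps2_dx_def)

lemma coeff2_fps2_dy [simp]: "coeff2 (fps2_dy F) i j = real (Suc j) * coeff2 F i (Suc j)"
proof -
  have "(of_nat (Suc j) * fps_nth F (Suc j) :: real fps) = fps_const (of_nat (Suc j)) * fps_nth F (Suc j)"
    by (simp only: fps_of_nat)
  then show ?thesis
    by (simp only: coeff2_def fps_deriv_nth fps_mult_left_const_nth Suc_eq_plus1)
qed

lemma coeff2_add [simp]: "coeff2 (F + G) i j = coeff2 F i j + coeff2 G i j"
  by (simp add: coeff2_def)

lemma coeff2_diff [simp]: "coeff2 (F - G) i j = coeff2 F i j - coeff2 G i j"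
  by (simp add: coeff2_def)

lemma coeff2_zero [simp]: "coeff2 0 i j = 0"
  by (simp add: coeff2_def)

lemma coeff2_one [simp]: "coeff2 1 i j = (if i = 0 \<and> j = 0 then 1 else 0)"
  by (simp add: coeff2_def)

lemma coeff2_sum: "coeff2 (sum F S) i j = (\<Sum>k\<in>S. coeff2 (F k) i j)"
  by (induction S rule: infinite_finite_induct) (auto simp: coeff2_def)

lemma coeff2_mult:
  "coeff2 (F * G) p q = (\<Sum>j\<le>q. \<Sum>i\<le>p. coeff2 F i j * coeff2 G (p - i) (q - j))"
  by (simp add: coeff2_def fps_mult_nth fps_sum_nth atLeast0AtMost)

lemma coeff2_fps2_of_mult: "coeff2 (fps2_of f * fps2_of g) p q = conv2 f g p q"
  by (simp add: coeff2_mult conv2_def sum.swap[of _ "{..q}"])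

lemma coeff2_const [simp]: "coeff2 (fps2_const c) i j = (if i = 0 \<and> j = 0 then c else 0)"
  by (simp add: coeff2_def fps2_const_def)

lemma coeff2_const_mult [simp]: "coeff2 (fps2_const c * F) i j = c * coeff2 F i j"
  by (simp add: coeff2_def fps2_const_def fps_mult_left_const_nth)

lemma fps2_const_0 [simp]: "fps2_const 0 = 0"
  by (simp add: fps2_const_def)

lemma fps2_const_1 [simp]: "fps2_const 1 = 1"
  by (simp add: fps2_const_def)

lemma fps2_const_add: "fps2_const (c + d) = fps2_const c + fps2_const d"
  by (simp add: fps2_const_def)

lemma fps2_const_uminus: "fps2_const (- c) = - fps2_const c"
  by (simp add: fps2_const_def)

lemma fps2_const_diff: "fps2_const (c - d) = fps2_const c - fps2_const d"
  by (simp add: fps2_const_def)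

lemma fps2_const_mult: "fps2_const (c * d) = fps2_const c * fps2_const d"
  by (simp add: fps2_const_def)

lemma fps2_const_power: "fps2_const (c ^ k) = fps2_const c ^ k"
  by (simp add: fps2_const_def fps_const_power)

lemma coeff2_X_power_Y_power:
  "coeff2 (fps2_X ^ i * fps2_Y ^ j) p q = (if p = i \<and> q = j then 1 else 0)"
  by (simp add: coeff2_def fps2_X_def fps2_Y_def fps_const_power fps_mult_left_const_nth
      fps_X_power_nth)

lemma coeff2_X [simp]: "coeff2 fps2_X p q = (if p = 1 \<and> q = 0 then 1 else 0)"
  using coeff2_X_power_Y_power[of 1 0 p q] by simp

lemma coeff2_Y [simp]: "coeff2 fps2_Y p q = (if p = 0 \<and> q = 1 then 1 else 0)"
  using coeff2_X_power_Y_power[of 0 1 p q] by simp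

lemma fps2_dx_mult: "fps2_dx (F * G) = fps2_dx F * G + F * fps2_dx G"
proof (rule fps_ext)
  fix j
  show "fps_nth (fps2_dx (F * G)) j = fps_nth (fps2_dx F * G + F * fps2_dx G) j"
    by (simp add: fps2_dx_def fps_mult_nth fps_deriv_sum fps_deriv_mult sum.distrib add.commute)
qed

lemma fps2_dx_add [simp]: "fps2_dx (F + G) = fps2_dx F + fps2_dx G"
  by (rule fps2_eqI) (simp add: algebra_simps)

lemma fps2_dx_diff [simp]: "fps2_dx (F - G) = fps2_dx F - fps2_dx G"
  by (rule fps2_eqI) (simp add: algebra_simps)

lemma fps2_dx_const [simp]: "fps2_dx (fps2_const c) = 0"
  by (rule fps2_eqI) simp

lemma fps2_dx_zero [simp]: "fps2_dx 0 = 0"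
  by (rule fps2_eqI) simp

lemma fps2_dx_one [simp]: "fps2_dx 1 = 0"
  by (rule fps2_eqI) simp

lemma fps2_dx_X [simp]: "fps2_dx fps2_X = 1"
  by (rule fps2_eqI) simp

lemma fps2_dx_Y [simp]: "fps2_dx fps2_Y = 0"
  by (rule fps2_eqI) simp

lemma fps2_dy_const [simp]: "fps2_dy (fps2_const c) = 0"
  by (simp add: fps2_const_def)

lemma fps2_dy_X [simp]: "fps2_dy fps2_X = 0"
  by (simp add: fps2_X_def)

lemma fps2_dy_Y [simp]: "fps2_dy fps2_Y = 1"
  by (simp add: fps2_Y_def)

lemma fps2_dx_dy_commute: "fps2_dx (fps2_dy F) = fps2_dy (fps2_dx F)"
  by (rule fps2_eqI) (simp add: algebra_simps)

definition lie_deriv :: "fps2 \<Rightarrow> fps2 \<Rightarrow> fps2 \<Rightarrow> fps2" where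
  "lie_deriv P Q G = P * fps2_dx G + Q * fps2_dy G"

lemma lie_deriv_mult: "lie_deriv P Q (F * G) = lie_deriv P Q F * G + F * lie_deriv P Q G"
  by (simp add: lie_deriv_def fps2_dx_mult fps_deriv_mult algebra_simps)

lemma lie_deriv_add: "lie_deriv P Q (F + G) = lie_deriv P Q F + lie_deriv P Q G"
  by (simp add: lie_deriv_def algebra_simps)

lemma lie_deriv_diff: "lie_deriv P Q (F - G) = lie_deriv P Q F - lie_deriv P Q G"
  by (simp add: lie_deriv_def algebra_simps)

lemma lie_deriv_const_mult: "lie_deriv P Q (fps2_const c * G) = fps2_const c * lie_deriv P Q G"
  by (simp add: lie_deriv_def algebra_simps fps2_dx_mult fps_deriv_mult)

lemma lie_deriv_zero [simp]: "lie_deriv P Q 0 = 0"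
  by (simp add: lie_deriv_def)

lemma lie_deriv_one [simp]: "lie_deriv P Q 1 = 0"
  by (simp add: lie_deriv_def)

lemma lie_deriv_X: "lie_deriv P Q fps2_X = P"
  by (simp add: lie_deriv_def)

lemma lie_deriv_Y: "lie_deriv P Q fps2_Y = Q"
  by (simp add: lie_deriv_def)

lemma lie_deriv_sum: "lie_deriv P Q (sum F S) = (\<Sum>k\<in>S. lie_deriv P Q (F k))"
  by (induction S rule: infinite_finite_induct) (auto simp: lie_deriv_add)

lemma fps2_dx_sum_squares:
  assumes "fps2_dx Q = fps2_dy P"
  shows "fps2_dx (P * P + Q * Q) = fps2_const 2 * lie_deriv P Q P"
  using assms by (simp add: fps2_dx_mult lie_deriv_def fps2_const_add[of 1 1, simplified]
      algebra_simps)

lemma fps2_dy_sum_squares: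
  assumes "fps2_dx Q = fps2_dy P"
  shows "fps2_dy (P * P + Q * Q) = fps2_const 2 * lie_deriv P Q Q"
  using assms by (simp add: fps_deriv_mult lie_deriv_def fps2_const_add[of 1 1, simplified]
      algebra_simps)

definition ord_ge :: "nat \<Rightarrow> fps2 \<Rightarrow> bool" where
  "ord_ge d F \<longleftrightarrow> (\<forall>i j. i + j < d \<longrightarrow> coeff2 F i j = 0)"

lemma ord_ge_0 [simp]: "ord_ge 0 F"
  by (simp add: ord_ge_def)

lemma ord_ge_zero [simp]: "ord_ge d 0"
  by (simp add: ord_ge_def)

lemma ord_ge_mono: "ord_ge d F \<Longrightarrow> e \<le> d \<Longrightarrow> ord_ge e F"
  by (simp add: ord_ge_def)

lemma ord_ge_add: "ord_ge d F \<Longrightarrow> ord_ge d G \<Longrightarrow> ord_ge d (F + G)"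
  by (simp add: ord_ge_def)

lemma ord_ge_diff: "ord_ge d F \<Longrightarrow> ord_ge d G \<Longrightarrow> ord_ge d (F - G)"
  by (simp add: ord_ge_def)

lemma ord_ge_const_mult: "ord_ge d F \<Longrightarrow> ord_ge d (fps2_const c * F)"
  by (simp add: ord_ge_def)

lemma ord_ge_sum: "(\<And>k. k \<in> S \<Longrightarrow> ord_ge d (F k)) \<Longrightarrow> ord_ge d (sum F S)"
  by (simp add: ord_ge_def coeff2_sum)

lemma ord_ge_X: "ord_ge 1 fps2_X"
  by (simp add: ord_ge_def)

lemma ord_ge_Y: "ord_ge 1 fps2_Y"
  by (simp add: ord_ge_def)

lemma ord_ge_mult: "ord_ge d F \<Longrightarrow> ord_ge e G \<Longrightarrow> ord_ge (d + e) (F * G)"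
  unfolding ord_ge_def coeff2_mult
proof (intro allI impI sum.neutral ballI)
  fix p q j i
  assume "\<forall>i j. i + j < d \<longrightarrow> coeff2 F i j = 0" "\<forall>i j. i + j < e \<longrightarrow> coeff2 G i j = 0"
    and "p + q < d + e" "j \<in> {..q}" "i \<in> {..p}"
  then show "coeff2 F i j * coeff2 G (p - i) (q - j) = 0"
    by (cases "i + j < d") auto
qed

lemma ord_ge_power: "ord_ge d F \<Longrightarrow> ord_ge (d * k) (F ^ k)"
  by (induction k) (auto dest: ord_ge_mult[of d F])

lemma ord_ge_lie_deriv:
  assumes "ord_ge 1 P" "ord_ge 1 Q" "ord_ge d F"
  shows "ord_ge d (lie_deriv P Q F)"
proof -
  have "ord_ge (d - 1) (fps2_dx F)" "ord_ge (d - 1) (fps2_dy F)"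
    using assms(3) by (simp_all add: ord_ge_def)
  then have "ord_ge (1 + (d - 1)) (P * fps2_dx F)" "ord_ge (1 + (d - 1)) (Q * fps2_dy F)"
    using assms(1,2) by (blast intro: ord_ge_mult)+
  then show ?thesis
    unfolding lie_deriv_def by (auto intro: ord_ge_add ord_ge_mono)
qed

lemma ord_ge_mult_diff:
  assumes "ord_ge (Suc d) (F - F0)" "ord_ge e G" "ord_ge d F0" "ord_ge (Suc e) (G - G0)"
  shows "ord_ge (Suc (d + e)) (F * G - F0 * G0)"
proof -
  have "F * G - F0 * G0 = (F - F0) * G + F0 * (G - G0)"
    by (simp add: algebra_simps)
  moreover have "ord_ge (Suc d + e) ((F - F0) * G)" "ord_ge (d + Suc e) (F0 * (G - G0))"
    using ord_ge_mult[OF assms(1,2)] ord_ge_mult[OF assms(3,4)] by simp_all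
  ultimately show ?thesis
    by (simp add: ord_ge_add)
qed

lemma ord_ge_power_diff:
  assumes "ord_ge 1 G" "ord_ge 2 (F - G)"
  shows "ord_ge (Suc k) (F ^ k - G ^ k)"
proof (induction k)
  case 0
  then show ?case by (simp add: ord_ge_def)
next
  case (Suc k)
  have "ord_ge 1 F"
    using assms by (auto simp: ord_ge_def)
  then have "ord_ge (Suc (1 + k)) (F * F ^ k - G * G ^ k)"
    using assms Suc ord_ge_power[of 1 F k] by (intro ord_ge_mult_diff) (simp_all add: numeral_2_eq_2)
  then show ?case
    by simp
qed

lemma ord_ge_lie_deriv_power:
  assumes "ord_ge 1 F" "1 \<le> d" "ord_ge d (lie_deriv P Q F - fps2_const c * F)"
  shows "ord_ge (d - 1 + k) (lie_deriv P Q (F ^ k) - fps2_const (c * k) * F ^ k)"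
proof (induction k)
  case 0
  then show ?case by simp
next
  case (Suc k)
  define e1 where "e1 = lie_deriv P Q F - fps2_const c * F"
  define e where "e = lie_deriv P Q (F ^ k) - fps2_const (c * k) * F ^ k"
  have "lie_deriv P Q (F ^ Suc k) - fps2_const (c * Suc k) * F ^ Suc k = e1 * F ^ k + F * e"
    by (simp add: e1_def e_def lie_deriv_mult fps2_const_add fps2_const_mult distrib_left
        algebra_simps)
  moreover have "ord_ge (d + 1 * k) (e1 * F ^ k)" "ord_ge (1 + (d - 1 + k)) (F * e)"
    using ord_ge_mult[OF assms(3) ord_ge_power[OF assms(1)]] ord_ge_mult[OF assms(1) Suc]
    by (simp_all add: e1_def e_def)
  ultimately show ?case
    using assms(2) by (auto intro: ord_ge_add ord_ge_mono)
qed

section \<open>The resonance obstruction for formal series\<close>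

text \<open>\<open>P\<close> and \<open>Q\<close> play the roles of \<open>z\<^sub>x\<close> and \<open>z\<^sub>y\<close>: if \<open>z\<^sub>x\<^sup>2 + z\<^sub>y\<^sup>2 = a\<^sup>2x\<^sup>2 + b\<^sup>2y\<^sup>2\<close> up to
  order \<open>m + n\<close>, then differentiating gives the hypotheses \<open>lie_P\<close> and \<open>lie_Q\<close>.\<close>

locale resonant_eikonal =
  fixes a b :: real and m n :: nat and P Q :: fps2
  assumes a_pos: "a > 0" and b_pos: "b > 0" and m_pos: "m > 0" and n_pos: "n > 0"
    and resonance: "real m * a = real n * b"
    and P_linear: "ord_ge 2 (P - fps2_const a * fps2_X)"
    and Q_linear: "ord_ge 2 (Q + fps2_const b * fps2_Y)"
    and lie_P: "ord_ge (m + n - 1) (lie_deriv P Q P - fps2_const (a\<^sup>2) * fps2_X)"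
    and lie_Q: "ord_ge (m + n - 1) (lie_deriv P Q Q - fps2_const (b\<^sup>2) * fps2_Y)"
begin

abbreviation lie :: "fps2 \<Rightarrow> fps2" where
  "lie \<equiv> lie_deriv P Q"

text \<open>\<open>\<xi> \<approx> 2ax\<close> and \<open>\<eta> \<approx> -2by\<close> are eigenfunctions of \<^term>\<open>lie\<close> with eigenvalues \<open>a\<close> and \<open>-b\<close>
  up to order \<open>m + n - 1\<close>. Applying \<open>lie - b\<close> to the expansion of \<open>\<zeta> = Q + by\<close> in the monomials
  \<open>\<xi>\<^sup>i\<eta>\<^sup>j\<close> multiplies the coefficient of \<open>\<xi>\<^sup>m\<eta>\<^sup>n\<^sup>-\<^sup>1\<close> by \<open>ma - nb = 0\<close>.\<close>

definition xi :: fps2 where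
  "xi = P + fps2_const a * fps2_X"

definition eta :: fps2 where
  "eta = Q - fps2_const b * fps2_Y"

definition zeta :: fps2 where
  "zeta = Q + fps2_const b * fps2_Y"

definition lie_shift :: "fps2 \<Rightarrow> fps2" where
  "lie_shift G = lie G - fps2_const b * G"

lemma lie_shift_sum: "lie_shift (sum F S) = (\<Sum>k\<in>S. lie_shift (F k))"
  by (simp add: lie_shift_def lie_deriv_sum sum_subtractf sum_distrib_left)

lemma lie_shift_const_mult: "lie_shift (fps2_const c * G) = fps2_const c * lie_shift G"
  unfolding lie_shift_def lie_deriv_const_mult by (simp add: algebra_simps)

definition xi_eta_poly :: "(nat \<Rightarrow> nat \<Rightarrow> real) \<Rightarrow> fps2" where
  "xi_eta_poly \<beta> = (\<Sum>i<m + n. \<Sum>j<m + n. fps2_const (\<beta> i j) * (xi ^ i * eta ^ j))"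

lemma ord_ge_P: "ord_ge 1 P"
proof -
  have "coeff2 (P - fps2_const a * fps2_X) 0 0 = 0"
    using P_linear unfolding ord_ge_def by (metis add_0 pos2)
  then show ?thesis
    by (simp add: ord_ge_def)
qed

lemma ord_ge_Q: "ord_ge 1 Q"
proof -
  have "coeff2 (Q + fps2_const b * fps2_Y) 0 0 = 0"
    using Q_linear unfolding ord_ge_def by (metis add_0 pos2)
  then show ?thesis
    by (simp add: ord_ge_def)
qed

lemma xi_linear: "ord_ge 2 (xi - fps2_const (2 * a) * fps2_X)"
proof -
  have "xi - fps2_const (2 * a) * fps2_X = P - fps2_const a * fps2_X"
    by (rule fps2_eqI) (simp add: xi_def)
  then show ?thesis
    using P_linear by simp
qed

lemma eta_linear: "ord_ge 2 (eta - fps2_const (- 2 * b) * fps2_Y)"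
proof -
  have "eta - fps2_const (- 2 * b) * fps2_Y = Q + fps2_const b * fps2_Y"
    by (rule fps2_eqI) (simp add: eta_def)
  then show ?thesis
    using Q_linear by simp
qed

lemma ord_ge_xi: "ord_ge 1 xi"
  using ord_ge_P by (simp add: xi_def ord_ge_def)

lemma ord_ge_eta: "ord_ge 1 eta"
  using ord_ge_Q by (simp add: eta_def ord_ge_def)

lemma lie_xi: "ord_ge (m + n - 1) (lie xi - fps2_const a * xi)"
proof -
  have "lie xi = lie P + fps2_const a * P"
    by (simp only: xi_def lie_deriv_add lie_deriv_const_mult lie_deriv_X)
  then have "lie xi - fps2_const a * xi = lie P - fps2_const (a\<^sup>2) * fps2_X"
    by (simp add: xi_def fps2_const_mult power2_eq_square algebra_simps)
  then show ?thesis
    using lie_P by simp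
qed

lemma lie_eta: "ord_ge (m + n - 1) (lie eta - fps2_const (- b) * eta)"
proof -
  have "lie eta = lie Q - fps2_const b * Q"
    by (simp only: eta_def lie_deriv_diff lie_deriv_const_mult lie_deriv_Y)
  then have "lie eta - fps2_const (- b) * eta = lie Q - fps2_const (b\<^sup>2) * fps2_Y"
    by (simp add: eta_def fps2_const_mult fps2_const_uminus power2_eq_square algebra_simps)
  then show ?thesis
    using lie_Q by simp
qed

lemma lie_shift_zeta: "lie_shift zeta = lie Q - fps2_const (b\<^sup>2) * fps2_Y"
proof -
  have "lie zeta = lie Q + fps2_const b * Q"
    by (simp only: zeta_def lie_deriv_add lie_deriv_const_mult lie_deriv_Y)
  then show ?thesis
    by (simp add: lie_shift_def zeta_def fps2_const_mult power2_eq_square algebra_simps)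
qed

lemma lie_shift_xi_eta_monomial:
  assumes "2 \<le> i + j"
  shows "ord_ge (m + n)
    (lie_shift (xi ^ i * eta ^ j) - fps2_const (a * i - b * j - b) * (xi ^ i * eta ^ j))"
proof -
  define e where "e = lie (xi ^ i) - fps2_const (a * i) * xi ^ i"
  define e' where "e' = lie (eta ^ j) - fps2_const (- b * j) * eta ^ j"
  have "1 \<le> m + n - 1"
    using m_pos n_pos by simp
  then have "ord_ge (m + n - 1 - 1 + i) e" "ord_ge (m + n - 1 - 1 + j) e'"
    unfolding e_def e'_def
    by (intro ord_ge_lie_deriv_power ord_ge_xi ord_ge_eta lie_xi lie_eta; simp)+
  then have "ord_ge (m + n - 1 - 1 + i + 1 * j) (e * eta ^ j)"
    and "ord_ge (1 * i + (m + n - 1 - 1 + j)) (xi ^ i * e')"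
    using ord_ge_mult ord_ge_power ord_ge_xi ord_ge_eta by blast+
  then have "ord_ge (m + n) (e * eta ^ j)" "ord_ge (m + n) (xi ^ i * e')"
    using assms by (auto elim!: ord_ge_mono)
  moreover
  have lie_xi_power: "lie (xi ^ i) = fps2_const (a * i) * xi ^ i + e"
    and lie_eta_power: "lie (eta ^ j) = fps2_const (- b * j) * eta ^ j + e'"
    by (simp_all add: e_def e'_def)
  have eigenvalue: "fps2_const (a * i - b * j - b) = fps2_const (a * i) + fps2_const (- b * j) - fps2_const b"
    by (simp flip: fps2_const_add fps2_const_diff)
  have "lie_shift (xi ^ i * eta ^ j) - fps2_const (a * i - b * j - b) * (xi ^ i * eta ^ j)
      = e * eta ^ j + xi ^ i * e'"
    unfolding lie_shift_def lie_deriv_mult lie_xi_power lie_eta_power eigenvalue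
    by (simp add: algebra_simps)
  ultimately show ?thesis
    by (simp add: ord_ge_add)
qed

lemma coeff2_xi_eta_monomial:
  assumes "p + q \<le> i + j"
  shows "coeff2 (xi ^ i * eta ^ j) p q = (if p = i \<and> q = j then (2 * a) ^ i * (- 2 * b) ^ j else 0)"
proof -
  let ?x = "fps2_const (2 * a) * fps2_X" and ?y = "fps2_const (- 2 * b) * fps2_Y"
  have "ord_ge (Suc (i + j)) (xi ^ i * eta ^ j - ?x ^ i * ?y ^ j)"
  proof (rule ord_ge_mult_diff)
    show "ord_ge (Suc i) (xi ^ i - ?x ^ i)" "ord_ge (Suc j) (eta ^ j - ?y ^ j)"
      by (intro ord_ge_power_diff xi_linear eta_linear ord_ge_const_mult ord_ge_X ord_ge_Y)+
    show "ord_ge j (eta ^ j)" "ord_ge i (?x ^ i)"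
      using ord_ge_power[OF ord_ge_eta, of j] ord_ge_power[OF ord_ge_const_mult[OF ord_ge_X], of i]
      by simp_all
  qed
  moreover have "?x ^ i * ?y ^ j = fps2_const ((2 * a) ^ i * (- 2 * b) ^ j) * (fps2_X ^ i * fps2_Y ^ j)"
    by (simp add: power_mult_distrib fps2_const_power fps2_const_mult mult_ac)
  ultimately show ?thesis
    using assms by (auto simp: ord_ge_def coeff2_X_power_Y_power dest!: spec[of _ p] spec[of _ q])
qed

lemma coeff2_xi_eta_poly:
  assumes "p + q < m + n" and "\<And>i j. i + j < p + q \<Longrightarrow> \<beta> i j = 0"
  shows "coeff2 (xi_eta_poly \<beta>) p q = \<beta> p q * (2 * a) ^ p * (- 2 * b) ^ q"
proof -
  have "\<beta> i j * coeff2 (xi ^ i * eta ^ j) p q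
      = (if i = p then if j = q then \<beta> p q * (2 * a) ^ p * (- 2 * b) ^ q else 0 else 0)" for i j
    using assms(2)[of i j] by (cases "i + j < p + q") (auto simp: coeff2_xi_eta_monomial)
  then show ?thesis
    using assms(1) by (simp add: xi_eta_poly_def coeff2_sum) (subst sum.swap, simp)
qed

lemma xi_eta_poly_add: "xi_eta_poly (\<lambda>i j. \<beta> i j + \<beta>' i j) = xi_eta_poly \<beta> + xi_eta_poly \<beta>'"
  by (simp add: xi_eta_poly_def fps2_const_add distrib_right sum.distrib)

lemma xi_eta_poly_zero: "xi_eta_poly (\<lambda>i j. 0) = 0"
  by (simp add: xi_eta_poly_def)

lemma xi_eta_expansion:
  assumes "ord_ge d F"
  shows "\<exists>\<beta>. (\<forall>i j. \<beta> i j \<noteq> 0 \<longrightarrow> d \<le> i + j \<and> i + j < m + n) \<and> ord_ge (m + n) (F - xi_eta_poly \<beta>)"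
  using assms
proof (induction "m + n - d" arbitrary: d F)
  case 0
  then show ?case
    by (intro exI[of _ "\<lambda>i j. 0"]) (auto simp: xi_eta_poly_zero elim: ord_ge_mono)
next
  case (Suc k)
  define \<beta>0 where "\<beta>0 i j = (if i + j = d then coeff2 F i j / ((2 * a) ^ i * (- 2 * b) ^ j) else 0)"
    for i j
  have "ord_ge (Suc d) (F - xi_eta_poly \<beta>0)"
    unfolding ord_ge_def
  proof (intro allI impI)
    fix p q
    assume pq: "p + q < Suc d"
    have "coeff2 (xi_eta_poly \<beta>0) p q = \<beta>0 p q * (2 * a) ^ p * (- 2 * b) ^ q"
      using pq Suc.hyps(2) by (intro coeff2_xi_eta_poly) (auto simp: \<beta>0_def)
    then show "coeff2 (F - xi_eta_poly \<beta>0) p q = 0"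
      using Suc.prems pq a_pos b_pos by (auto simp: \<beta>0_def ord_ge_def)
  qed
  moreover have "k = m + n - Suc d"
    using Suc.hyps(2) by simp
  ultimately obtain \<beta>' where \<beta>': "\<forall>i j. \<beta>' i j \<noteq> 0 \<longrightarrow> Suc d \<le> i + j \<and> i + j < m + n"
    "ord_ge (m + n) (F - xi_eta_poly \<beta>0 - xi_eta_poly \<beta>')"
    using Suc.hyps(1) by blast
  have "d \<le> i + j \<and> i + j < m + n" if "\<beta>0 i j + \<beta>' i j \<noteq> 0" for i j
  proof (cases "i + j = d")
    case True
    then show ?thesis
      using Suc.hyps(2) by simp
  next
    case False
    then have "\<beta>' i j \<noteq> 0"
      using that by (simp add: \<beta>0_def)
    then show ?thesis
      using \<beta>'(1) by fastforce
  qed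
  moreover have "ord_ge (m + n) (F - xi_eta_poly (\<lambda>i j. \<beta>0 i j + \<beta>' i j))"
    using \<beta>'(2) by (simp add: xi_eta_poly_add algebra_simps)
  ultimately show ?case
    by (intro exI[of _ "\<lambda>i j. \<beta>0 i j + \<beta>' i j"]) blast
qed

lemma lie_shift_xi_eta_poly:
  assumes "\<And>i j. \<beta> i j \<noteq> 0 \<Longrightarrow> 2 \<le> i + j"
  shows "ord_ge (m + n) (lie_shift (xi_eta_poly \<beta>) - xi_eta_poly (\<lambda>i j. \<beta> i j * (a * i - b * j - b)))"
proof -
  have "lie_shift (xi_eta_poly \<beta>) - xi_eta_poly (\<lambda>i j. \<beta> i j * (a * i - b * j - b))
    = (\<Sum>i<m + n. \<Sum>j<m + n. fps2_const (\<beta> i j) * (lie_shift (xi ^ i * eta ^ j)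
        - fps2_const (a * i - b * j - b) * (xi ^ i * eta ^ j)))"
    unfolding xi_eta_poly_def fps2_const_mult
    by (simp only: lie_shift_sum lie_shift_const_mult mult.assoc sum_subtractf[symmetric]
        right_diff_distrib)
  also have "ord_ge (m + n) \<dots>"
    using assms by (intro ord_ge_sum) (metis fps2_const_0 mult_zero_left ord_ge_zero
        ord_ge_const_mult lie_shift_xi_eta_monomial)
  finally show ?thesis .
qed

lemma xi_eta_poly_triangular:
  assumes "ord_ge d (xi_eta_poly \<gamma>)" "d \<le> m + n" "i + j < d"
  shows "\<gamma> i j = 0"
  using assms(3)
proof (induction "i + j" arbitrary: i j rule: less_induct)
  case less
  then have "coeff2 (xi_eta_poly \<gamma>) i j = \<gamma> i j * (2 * a) ^ i * (- 2 * b) ^ j"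
    using assms(2) by (intro coeff2_xi_eta_poly) auto
  moreover have "coeff2 (xi_eta_poly \<gamma>) i j = 0"
    using assms(1) less.prems by (simp add: ord_ge_def)
  ultimately show ?case
    using a_pos b_pos by simp
qed

theorem coeff2_lie_Q_resonant: "coeff2 (lie Q) m (n - 1) = 0"
proof -
  obtain \<beta> where \<beta>: "\<forall>i j. \<beta> i j \<noteq> 0 \<longrightarrow> 2 \<le> i + j \<and> i + j < m + n"
    "ord_ge (m + n) (zeta - xi_eta_poly \<beta>)"
    using xi_eta_expansion[of 2 zeta] Q_linear by (auto simp: zeta_def)
  define \<gamma> where "\<gamma> i j = \<beta> i j * (a * i - b * j - b)" for i j
  have "ord_ge (m + n) (lie_shift (zeta - xi_eta_poly \<beta>))"
    unfolding lie_shift_def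
    by (intro ord_ge_diff ord_ge_lie_deriv ord_ge_P ord_ge_Q \<beta>(2) ord_ge_const_mult)
  moreover have "ord_ge (m + n) (lie_shift (xi_eta_poly \<beta>) - xi_eta_poly \<gamma>)"
    unfolding \<gamma>_def using \<beta>(1) by (intro lie_shift_xi_eta_poly) blast
  ultimately have close: "ord_ge (m + n) (lie_shift zeta - xi_eta_poly \<gamma>)"
    using ord_ge_add by (fastforce simp: lie_shift_def lie_deriv_diff algebra_simps)
  have "ord_ge (m + n - 1) (lie_shift zeta - (lie_shift zeta - xi_eta_poly \<gamma>))"
  proof (rule ord_ge_diff)
    show "ord_ge (m + n - 1) (lie_shift zeta)"
      using lie_Q by (simp add: lie_shift_zeta)
    show "ord_ge (m + n - 1) (lie_shift zeta - xi_eta_poly \<gamma>)"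
      using close by (rule ord_ge_mono) simp
  qed
  then have "ord_ge (m + n - 1) (xi_eta_poly \<gamma>)"
    by simp
  then have "\<gamma> i j = 0" if "i + j < m + n - 1" for i j
    using that by (intro xi_eta_poly_triangular) auto
  moreover have "\<gamma> m (n - 1) = 0"
    using n_pos resonance by (simp add: \<gamma>_def of_nat_diff algebra_simps)
  ultimately have "coeff2 (xi_eta_poly \<gamma>) m (n - 1) = 0"
    using n_pos by (subst coeff2_xi_eta_poly) auto
  then have "coeff2 (lie_shift zeta) m (n - 1) = 0"
    using close n_pos by (auto simp: ord_ge_def dest!: spec[of _ m])
  then show ?thesis
    using m_pos by (simp add: lie_shift_zeta)
qed

end

lemma coeff2_lie_deriv_gradient:
  assumes "fps2_dx Q = fps2_dy P" and "P * P + Q * Q = H"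
  shows "coeff2 (lie_deriv P Q P) i j = real (Suc i) * coeff2 H (Suc i) j / 2"
    and "coeff2 (lie_deriv P Q Q) i j = real (Suc j) * coeff2 H i (Suc j) / 2"
proof -
  have "coeff2 (fps2_dx H) i j = 2 * coeff2 (lie_deriv P Q P) i j"
    "coeff2 (fps2_dy H) i j = 2 * coeff2 (lie_deriv P Q Q) i j"
    using fps2_dx_sum_squares[OF assms(1)] fps2_dy_sum_squares[OF assms(1)] assms(2) by simp_all
  then show "coeff2 (lie_deriv P Q P) i j = real (Suc i) * coeff2 H (Suc i) j / 2"
    and "coeff2 (lie_deriv P Q Q) i j = real (Suc j) * coeff2 H i (Suc j) / 2"
    by simp_all
qed

theorem no_formal_solution:
  fixes a b c :: real and m n :: nat
  assumes "a > 0" "b > 0" "m > 0" "n > 0" "real m * a = real n * b" "c \<noteq> 0"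
  shows "\<not> (\<exists>zc. (\<forall>i j. i + j \<le> 2 \<longrightarrow> zc i j = z_low a b i j)
    \<and> (\<forall>p q. conv2 (fdx zc) (fdx zc) p q + conv2 (fdy zc) (fdy zc) p q
           = (if (p, q) = (m, n) then c else h_low a b p q)))"
proof
  assume "\<exists>zc. (\<forall>i j. i + j \<le> 2 \<longrightarrow> zc i j = z_low a b i j)
    \<and> (\<forall>p q. conv2 (fdx zc) (fdx zc) p q + conv2 (fdy zc) (fdy zc) p q
           = (if (p, q) = (m, n) then c else h_low a b p q))"
  then obtain zc where low: "\<forall>i j. i + j \<le> 2 \<longrightarrow> zc i j = z_low a b i j"
    and eq: "\<forall>p q. conv2 (fdx zc) (fdx zc) p q + conv2 (fdy zc) (fdy zc) p q
           = (if (p, q) = (m, n) then c else h_low a b p q)"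
    by blast
  define H where "H = fps2_of (\<lambda>p q. if (p, q) = (m, n) then c else h_low a b p q)"
  define P where "P = fps2_of (fdx zc)"
  define Q where "Q = fps2_of (fdy zc)"
  have "P = fps2_dx (fps2_of zc)" "Q = fps2_dy (fps2_of zc)"
    unfolding P_def Q_def by (auto intro: fps2_eqI simp: fdx_def fdy_def)
  then have gradient: "fps2_dx Q = fps2_dy P"
    by (simp add: fps2_dx_dy_commute)
  have eikonal: "P * P + Q * Q = H"
    by (rule fps2_eqI) (simp add: P_def Q_def H_def coeff2_fps2_of_mult eq)
  note lie_coeffs = coeff2_lie_deriv_gradient[OF gradient eikonal]
  have "zc 1 0 = 0" "zc 2 0 = a / 2" "zc 1 1 = 0" "zc 0 1 = 0" "zc 0 2 = - b / 2"
    using low by (auto simp: z_low_def)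
  then interpret resonant_eikonal a b m n P Q
  proof unfold_locales
    show "ord_ge 2 (P - fps2_const a * fps2_X)" "ord_ge 2 (Q + fps2_const b * fps2_Y)"
      using \<open>zc 1 0 = 0\<close> \<open>zc 2 0 = a / 2\<close> \<open>zc 1 1 = 0\<close> \<open>zc 0 1 = 0\<close> \<open>zc 0 2 = - b / 2\<close>
      by (auto simp: ord_ge_def P_def Q_def fdx_def fdy_def less_Suc_eq numeral_2_eq_2 add_is_1)
    show "ord_ge (m + n - 1) (lie_deriv P Q P - fps2_const (a\<^sup>2) * fps2_X)"
      "ord_ge (m + n - 1) (lie_deriv P Q Q - fps2_const (b\<^sup>2) * fps2_Y)"
      by (auto simp: ord_ge_def lie_coeffs H_def h_low_def)
  qed (use assms in auto)
  have "coeff2 (lie_deriv P Q Q) m (n - 1) = real n * c / 2"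
    using lie_coeffs(2) \<open>n > 0\<close> by (simp add: H_def)
  then show False
    using coeff2_lie_Q_resonant \<open>n > 0\<close> \<open>c \<noteq> 0\<close> by simp
qed

section \<open>Partial derivatives and the classes \<open>C\<^sup>k\<close>\<close>

definition Dxy :: "nat \<Rightarrow> nat \<Rightarrow> (real \<times> real \<Rightarrow> real) \<Rightarrow> real \<times> real \<Rightarrow> real" where
  "Dxy i j f = (px ^^ i) ((py ^^ j) f)"

lemma px_Pair: "px f (x, y) = deriv (\<lambda>t. f (t, y)) x"
  by (simp add: px_def)

lemma py_Pair: "py f (x, y) = deriv (\<lambda>t. f (x, t)) y"
  by (simp add: py_def)

lemma px_eqI: "((\<lambda>t. f (t, y)) has_real_derivative D) (at x) \<Longrightarrow> px f (x, y) = D"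
  by (simp add: px_Pair DERIV_imp_deriv)

lemma py_eqI: "((\<lambda>t. f (x, t)) has_real_derivative D) (at y) \<Longrightarrow> py f (x, y) = D"
  by (simp add: py_Pair DERIV_imp_deriv)

lemma open_slice_x: "open U \<Longrightarrow> open {t. (t, y) \<in> U}"
  using open_vimage[of U "\<lambda>t. (t, y)"] by (simp add: vimage_def continuous_on_Pair)

lemma open_slice_y: "open U \<Longrightarrow> open {t. (x, t) \<in> U}"
  using open_vimage[of U "\<lambda>t. (x, t)"] by (simp add: vimage_def continuous_on_Pair)

lemma has_real_derivative_px:
  assumes "f differentiable_on U" "open U" "(x, y) \<in> U"
  shows "((\<lambda>t. f (t, y)) has_real_derivative px f (x, y)) (at x)"
proof -
  have "f differentiable at (x, y)"
    using assms by (metis at_within_open differentiable_on_def)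
  moreover have "(\<lambda>t. (t, y)) differentiable at x"
    by (rule differentiableI) (auto intro!: derivative_eq_intros)
  ultimately have "(f \<circ> (\<lambda>t. (t, y))) differentiable at x"
    using differentiable_chain_at by fastforce
  then show ?thesis
    unfolding px_Pair DERIV_deriv_iff_real_differentiable by (simp add: o_def)
qed

lemma has_real_derivative_py:
  assumes "f differentiable_on U" "open U" "(x, y) \<in> U"
  shows "((\<lambda>t. f (x, t)) has_real_derivative py f (x, y)) (at y)"
proof -
  have "f differentiable at (x, y)"
    using assms by (metis at_within_open differentiable_on_def)
  moreover have "(\<lambda>t. (x, t)) differentiable at y"
    by (rule differentiableI) (auto intro!: derivative_eq_intros)
  ultimately have "(f \<circ> (\<lambda>t. (x, t))) differentiable at y"
    using differentiable_chain_at by fastforce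
  then show ?thesis
    unfolding py_Pair DERIV_deriv_iff_real_differentiable by (simp add: o_def)
qed

lemma px_cong:
  assumes "open U" "\<And>q. q \<in> U \<Longrightarrow> f q = g q" "p \<in> U"
  shows "px f p = px g p"
proof -
  obtain x y where p: "p = (x, y)"
    by (cases p)
  have "\<forall>\<^sub>F t in nhds x. t \<in> {t. (t, y) \<in> U}"
    using assms p by (intro eventually_nhds_in_open open_slice_x) auto
  then have "\<forall>\<^sub>F t in nhds x. f (t, y) = g (t, y)"
    by eventually_elim (use assms in auto)
  then show ?thesis
    unfolding p px_Pair by (rule deriv_cong_ev) simp
qed

lemma py_cong:
  assumes "open U" "\<And>q. q \<in> U \<Longrightarrow> f q = g q" "p \<in> U"
  shows "py f p = py g p"
proof -
  obtain x y where p: "p = (x, y)"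
    by (cases p)
  have "\<forall>\<^sub>F t in nhds y. t \<in> {t. (x, t) \<in> U}"
    using assms p by (intro eventually_nhds_in_open open_slice_y) auto
  then have "\<forall>\<^sub>F t in nhds y. f (x, t) = g (x, t)"
    by eventually_elim (use assms in auto)
  then show ?thesis
    unfolding p py_Pair by (rule deriv_cong_ev) simp
qed

lemma px_funpow_cong:
  "open U \<Longrightarrow> (\<And>q. q \<in> U \<Longrightarrow> f q = g q) \<Longrightarrow> p \<in> U \<Longrightarrow> (px ^^ i) f p = (px ^^ i) g p"
  by (induction i arbitrary: p) (auto intro: px_cong)

lemma py_funpow_cong:
  "open U \<Longrightarrow> (\<And>q. q \<in> U \<Longrightarrow> f q = g q) \<Longrightarrow> p \<in> U \<Longrightarrow> (py ^^ j) f p = (py ^^ j) g p"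
  by (induction j arbitrary: p) (auto intro: py_cong)

lemma Dxy_cong:
  "open U \<Longrightarrow> (\<And>q. q \<in> U \<Longrightarrow> f q = g q) \<Longrightarrow> p \<in> U \<Longrightarrow> Dxy i j f p = Dxy i j g p"
  unfolding Dxy_def by (rule px_funpow_cong) (auto intro: py_funpow_cong)

lemma px_add:
  assumes "open U" "f differentiable_on U" "g differentiable_on U" "(x, y) \<in> U"
  shows "px (\<lambda>p. f p + g p) (x, y) = px f (x, y) + px g (x, y)"
  using assms by (intro px_eqI DERIV_add has_real_derivative_px)

lemma py_add:
  assumes "open U" "f differentiable_on U" "g differentiable_on U" "(x, y) \<in> U"
  shows "py (\<lambda>p. f p + g p) (x, y) = py f (x, y) + py g (x, y)"
  using assms by (intro py_eqI DERIV_add has_real_derivative_py)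

lemma px_mult:
  assumes "open U" "f differentiable_on U" "g differentiable_on U" "(x, y) \<in> U"
  shows "px (\<lambda>p. f p * g p) (x, y) = f (x, y) * px g (x, y) + px f (x, y) * g (x, y)"
  using assms by (intro px_eqI DERIV_mult' has_real_derivative_px)

lemma py_mult:
  assumes "open U" "f differentiable_on U" "g differentiable_on U" "(x, y) \<in> U"
  shows "py (\<lambda>p. f p * g p) (x, y) = f (x, y) * py g (x, y) + py f (x, y) * g (x, y)"
  using assms by (intro py_eqI DERIV_mult' has_real_derivative_py)

lemma Ck_SucD: "Ck (Suc k) f U \<Longrightarrow> Ck k f U"
proof (induction k arbitrary: f)
  case 0
  then show ?case by (simp add: differentiable_imp_continuous_on)
next
  case (Suc k)
  have parts: "f differentiable_on U" "Ck (Suc k) (px f) U" "Ck (Suc k) (py f) U"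
    using Suc.prems by (simp_all only: Ck.simps)
  show ?case
    unfolding Ck.simps(2) using parts Suc.IH by blast
qed

lemma Ck_mono: "Ck k' f U \<Longrightarrow> k \<le> k' \<Longrightarrow> Ck k f U"
proof (induction k')
  case (Suc k')
  then show ?case
    by (cases "k = Suc k'") (auto simp del: Ck.simps simp add: le_Suc_eq dest: Ck_SucD)
qed simp

lemma Ck_px_funpow: "Ck (i + k) f U \<Longrightarrow> Ck k ((px ^^ i) f) U"
proof (induction i arbitrary: k)
  case (Suc i)
  have "Ck (Suc k) ((px ^^ i) f) U"
    using Suc.IH[of "Suc k"] Suc.prems by simp
  then show ?case
    by (simp only: funpow.simps o_apply Ck.simps(2))
qed simp

lemma Ck_py_funpow: "Ck (j + k) f U \<Longrightarrow> Ck k ((py ^^ j) f) U"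
proof (induction j arbitrary: k)
  case (Suc j)
  have "Ck (Suc k) ((py ^^ j) f) U"
    using Suc.IH[of "Suc k"] Suc.prems by simp
  then show ?case
    by (simp only: funpow.simps o_apply Ck.simps(2))
qed simp

lemma Ck_Dxy: "Ck (i + j + k) f U \<Longrightarrow> Ck k (Dxy i j f) U"
  unfolding Dxy_def by (rule Ck_px_funpow, rule Ck_py_funpow) (simp add: add_ac)

lemma Ck_cong: "open U \<Longrightarrow> (\<And>q. q \<in> U \<Longrightarrow> f q = g q) \<Longrightarrow> Ck k f U \<Longrightarrow> Ck k g U"
proof (induction k arbitrary: f g)
  case 0
  then show ?case
    using continuous_on_cong[of U U f g] by simp
next
  case (Suc k)
  have parts: "f differentiable_on U" "Ck k (px f) U" "Ck k (py f) U"
    using Suc.prems(3) by (simp_all only: Ck.simps)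
  have "g differentiable_on U"
    unfolding differentiable_on_def
  proof
    fix p
    assume p: "p \<in> U"
    then have "f differentiable at p within U"
      using parts(1) by (simp add: differentiable_on_def)
    then show "g differentiable at p within U"
      by (rule differentiable_transform_within[where d = 1]) (use p Suc.prems(2) in auto)
  qed
  moreover have "Ck k (px g) U"
    using Suc.prems by (intro Suc.IH[OF Suc.prems(1) _ parts(2)]) (auto intro: px_cong)
  moreover have "Ck k (py g) U"
    using Suc.prems by (intro Suc.IH[OF Suc.prems(1) _ parts(3)]) (auto intro: py_cong)
  ultimately show ?case
    by (simp only: Ck.simps)
qed

lemma Ck_add: "open U \<Longrightarrow> Ck k f U \<Longrightarrow> Ck k g U \<Longrightarrow> Ck k (\<lambda>p. f p + g p) U"
proof (induction k arbitrary: f g)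
  case 0
  then show ?case by (simp add: continuous_on_add)
next
  case (Suc k)
  have f: "f differentiable_on U" "Ck k (px f) U" "Ck k (py f) U"
    and g: "g differentiable_on U" "Ck k (px g) U" "Ck k (py g) U"
    using Suc.prems by simp_all
  have "Ck k (px (\<lambda>p. f p + g p)) U"
    using Suc.IH[OF Suc.prems(1) f(2) g(2)]
    by (rule Ck_cong[OF Suc.prems(1), rotated]) (use Suc.prems f g in \<open>auto simp: px_add\<close>)
  moreover have "Ck k (py (\<lambda>p. f p + g p)) U"
    using Suc.IH[OF Suc.prems(1) f(3) g(3)]
    by (rule Ck_cong[OF Suc.prems(1), rotated]) (use Suc.prems f g in \<open>auto simp: py_add\<close>)
  ultimately show ?case
    using f g by simp
qed

lemma Ck_mult: "open U \<Longrightarrow> Ck k f U \<Longrightarrow> Ck k g U \<Longrightarrow> Ck k (\<lambda>p. f p * g p) U"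
proof (induction k arbitrary: f g)
  case 0
  then show ?case by (simp add: continuous_on_mult)
next
  case (Suc k)
  have f: "f differentiable_on U" "Ck k (px f) U" "Ck k (py f) U" "Ck k f U"
    and g: "g differentiable_on U" "Ck k (px g) U" "Ck k (py g) U" "Ck k g U"
    using Suc.prems Ck_SucD[of k f U] Ck_SucD[of k g U] by simp_all
  have "Ck k (\<lambda>p. f p * px g p + px f p * g p) U"
    using Suc.IH Suc.prems(1) f g by (intro Ck_add) auto
  then have "Ck k (px (\<lambda>p. f p * g p)) U"
    by (rule Ck_cong[OF Suc.prems(1), rotated]) (use Suc.prems f g in \<open>auto simp: px_mult\<close>)
  moreover have "Ck k (\<lambda>p. f p * py g p + py f p * g p) U"
    using Suc.IH Suc.prems(1) f g by (intro Ck_add) auto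
  then have "Ck k (py (\<lambda>p. f p * g p)) U"
    by (rule Ck_cong[OF Suc.prems(1), rotated]) (use Suc.prems f g in \<open>auto simp: py_mult\<close>)
  ultimately show ?case
    using f g by simp
qed

lemma has_real_derivative_px_funpow:
  assumes "open U" "Ck N f U" "k < N" "(x, y) \<in> U"
  shows "((\<lambda>t. (px ^^ k) f (t, y)) has_real_derivative (px ^^ Suc k) f (x, y)) (at x)"
proof -
  have "Ck (Suc (N - Suc k)) ((px ^^ k) f) U"
    using assms(2,3) by (intro Ck_px_funpow) (simp add: Suc_diff_Suc)
  then have "(px ^^ k) f differentiable_on U"
    by simp
  from has_real_derivative_px[OF this assms(1,4)] show ?thesis
    by simp
qed

lemma has_real_derivative_py_funpow:
  assumes "open U" "Ck N f U" "k < N" "(x, y) \<in> U"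
  shows "((\<lambda>t. (py ^^ k) f (x, t)) has_real_derivative (py ^^ Suc k) f (x, y)) (at y)"
proof -
  have "Ck (Suc (N - Suc k)) ((py ^^ k) f) U"
    using assms(2,3) by (intro Ck_py_funpow) (simp add: Suc_diff_Suc)
  then have "(py ^^ k) f differentiable_on U"
    by simp
  from has_real_derivative_py[OF this assms(1,4)] show ?thesis
    by simp
qed

section \<open>Symmetry of mixed partial derivatives\<close>

lemma mixed_difference_mean_value:
  fixes g gx gxy :: "real \<Rightarrow> real \<Rightarrow> real"
  assumes "0 < h"
    and gx: "\<And>t s. x \<le> t \<Longrightarrow> t \<le> x + h \<Longrightarrow> y \<le> s \<Longrightarrow> s \<le> y + h \<Longrightarrow>
      ((\<lambda>t. g t s) has_real_derivative gx t s) (at t)"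
    and gxy: "\<And>t s. x \<le> t \<Longrightarrow> t \<le> x + h \<Longrightarrow> y \<le> s \<Longrightarrow> s \<le> y + h \<Longrightarrow>
      ((\<lambda>s. gx t s) has_real_derivative gxy t s) (at s)"
  shows "\<exists>\<xi> \<eta>. x < \<xi> \<and> \<xi> < x + h \<and> y < \<eta> \<and> \<eta> < y + h \<and>
    g (x + h) (y + h) - g (x + h) y - g x (y + h) + g x y = h * (h * gxy \<xi> \<eta>)"
proof -
  have "\<exists>\<xi>. x < \<xi> \<and> \<xi> < x + h \<and> (g (x + h) (y + h) - g (x + h) y) - (g x (y + h) - g x y)
      = (x + h - x) * (gx \<xi> (y + h) - gx \<xi> y)"
  proof (rule MVT2)
    fix t
    assume "x \<le> t" "t \<le> x + h"
    then show "((\<lambda>t. g t (y + h) - g t y) has_real_derivative gx t (y + h) - gx t y) (at t)"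
      using assms(1) by (intro DERIV_diff gx) auto
  qed (use assms(1) in simp)
  then obtain \<xi> where \<xi>: "x < \<xi>" "\<xi> < x + h"
    and "g (x + h) (y + h) - g (x + h) y - g x (y + h) + g x y = h * (gx \<xi> (y + h) - gx \<xi> y)"
    by (auto simp: algebra_simps)
  moreover have "\<exists>\<eta>. y < \<eta> \<and> \<eta> < y + h \<and> gx \<xi> (y + h) - gx \<xi> y = (y + h - y) * gxy \<xi> \<eta>"
  proof (rule MVT2)
    fix s
    assume "y \<le> s" "s \<le> y + h"
    then show "(gx \<xi> has_real_derivative gxy \<xi> s) (at s)"
      using \<xi> gxy[of \<xi> s] by simp
  qed (use assms(1) in simp)
  ultimately show ?thesis
    by auto
qed

lemma mixed_partials_meet_in_square:
  assumes U: "open U" and f: "Ck 2 f U" and "h > 0"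
    and square: "\<And>u v. x \<le> u \<Longrightarrow> u \<le> x + h \<Longrightarrow> y \<le> v \<Longrightarrow> v \<le> y + h \<Longrightarrow> (u, v) \<in> U"
  obtains \<xi> \<eta> \<xi>' \<eta>' where "x < \<xi>" "\<xi> < x + h" "y < \<eta>" "\<eta> < y + h"
    and "x < \<xi>'" "\<xi>' < x + h" "y < \<eta>'" "\<eta>' < y + h"
    and "py (px f) (\<xi>, \<eta>) = px (py f) (\<xi>', \<eta>')"
proof -
  have diff: "f differentiable_on U" "px f differentiable_on U" "py f differentiable_on U"
    using f by (simp_all add: numeral_2_eq_2)
  have "\<exists>\<xi> \<eta>. x < \<xi> \<and> \<xi> < x + h \<and> y < \<eta> \<and> \<eta> < y + h \<and>
    f (x + h, y + h) - f (x + h, y) - f (x, y + h) + f (x, y) = h * (h * py (px f) (\<xi>, \<eta>))"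
  proof (rule mixed_difference_mean_value[where g = "\<lambda>t s. f (t, s)" and gx = "\<lambda>t s. px f (t, s)"])
    fix t s
    assume "x \<le> t" "t \<le> x + h" "y \<le> s" "s \<le> y + h"
    then have "(t, s) \<in> U"
      by (rule square)
    then show "((\<lambda>t. f (t, s)) has_real_derivative px f (t, s)) (at t)"
      and "((\<lambda>s. px f (t, s)) has_real_derivative py (px f) (t, s)) (at s)"
      by (rule has_real_derivative_px[OF diff(1) U] has_real_derivative_py[OF diff(2) U])+
  qed (rule \<open>h > 0\<close>)
  then obtain \<xi> \<eta> where "x < \<xi>" "\<xi> < x + h" "y < \<eta>" "\<eta> < y + h"
    and \<Delta>: "f (x + h, y + h) - f (x + h, y) - f (x, y + h) + f (x, y) = h * (h * py (px f) (\<xi>, \<eta>))"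
    by blast
  have "\<exists>\<eta> \<xi>. y < \<eta> \<and> \<eta> < y + h \<and> x < \<xi> \<and> \<xi> < x + h \<and>
    f (x + h, y + h) - f (x, y + h) - f (x + h, y) + f (x, y) = h * (h * px (py f) (\<xi>, \<eta>))"
  proof (rule mixed_difference_mean_value[where g = "\<lambda>s t. f (t, s)" and gx = "\<lambda>s t. py f (t, s)"])
    fix s t
    assume "y \<le> s" "s \<le> y + h" "x \<le> t" "t \<le> x + h"
    then have "(t, s) \<in> U"
      by (intro square)
    then show "((\<lambda>s. f (t, s)) has_real_derivative py f (t, s)) (at s)"
      and "((\<lambda>t. py f (t, s)) has_real_derivative px (py f) (t, s)) (at t)"
      by (rule has_real_derivative_py[OF diff(1) U] has_real_derivative_px[OF diff(3) U])+
  qed (rule \<open>h > 0\<close>)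
  then obtain \<eta>' \<xi>' where "y < \<eta>'" "\<eta>' < y + h" "x < \<xi>'" "\<xi>' < x + h"
    and \<Delta>': "f (x + h, y + h) - f (x, y + h) - f (x + h, y) + f (x, y) = h * (h * px (py f) (\<xi>', \<eta>'))"
    by blast
  have "py (px f) (\<xi>, \<eta>) = px (py f) (\<xi>', \<eta>')"
    using \<Delta> \<Delta>' \<open>h > 0\<close> by (simp add: algebra_simps)
  with that show ?thesis
    using \<open>x < \<xi>\<close> \<open>\<xi> < x + h\<close> \<open>y < \<eta>\<close> \<open>\<eta> < y + h\<close>
      \<open>x < \<xi>'\<close> \<open>\<xi>' < x + h\<close> \<open>y < \<eta>'\<close> \<open>\<eta>' < y + h\<close> by blast
qed

lemma continuous_on_small_square:
  fixes G :: "real \<times> real \<Rightarrow> real"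
  assumes "open U" "continuous_on U G" "(x, y) \<in> U" "e > 0"
  obtains h where "h > 0"
    and "\<And>u v. x \<le> u \<Longrightarrow> u \<le> x + h \<Longrightarrow> y \<le> v \<Longrightarrow> v \<le> y + h \<Longrightarrow>
      (u, v) \<in> U \<and> dist (G (u, v)) (G (x, y)) < e"
proof -
  obtain d where "d > 0" and d: "\<And>q. q \<in> U \<Longrightarrow> dist q (x, y) < d \<Longrightarrow> dist (G q) (G (x, y)) < e"
    using assms(2-4) unfolding continuous_on_iff by metis
  obtain r where "r > 0" "ball (x, y) r \<subseteq> U"
    using assms(1,3) open_contains_ball by blast
  define h where "h = min r d / 3"
  have "(u, v) \<in> U \<and> dist (G (u, v)) (G (x, y)) < e"
    if "x \<le> u" "u \<le> x + h" "y \<le> v" "v \<le> y + h" for u v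
  proof -
    have "dist (u, v) (x, y) \<le> norm (u - x) + norm (v - y)"
      using norm_Pair_le[of "u - x" "v - y"] by (simp add: dist_norm)
    also have "\<dots> \<le> 2 * h"
      using that by simp
    also have "\<dots> < min r d"
      using \<open>r > 0\<close> \<open>d > 0\<close> unfolding h_def by linarith
    finally have "dist (u, v) (x, y) < min r d" .
    moreover have "(u, v) \<in> U"
      using calculation \<open>ball (x, y) r \<subseteq> U\<close> by (auto simp: dist_commute)
    ultimately show ?thesis
      using d by simp
  qed
  moreover have "h > 0"
    using \<open>r > 0\<close> \<open>d > 0\<close> by (simp add: h_def)
  ultimately show ?thesis
    using that by blast
qed

theorem px_py_commute:
  assumes U: "open U" and f: "Ck 2 f U" and p: "p \<in> U"
  shows "px (py f) p = py (px f) p"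
proof (rule ccontr)
  obtain x0 y0 where p0: "p = (x0, y0)"
    by (cases p)
  define A where "A = px (py f)"
  define B where "B = py (px f)"
  assume "px (py f) p \<noteq> py (px f) p"
  define e where "e = \<bar>A p - B p\<bar> / 2"
  have "e > 0"
    using \<open>px (py f) p \<noteq> py (px f) p\<close> by (simp add: e_def A_def B_def)
  have "continuous_on U A" "continuous_on U B"
    using f by (simp_all add: numeral_2_eq_2 A_def B_def)
  moreover have "(x0, y0) \<in> U"
    using p p0 by simp
  ultimately obtain hA hB where "hA > 0" "hB > 0"
    and nearA: "\<And>u v. x0 \<le> u \<Longrightarrow> u \<le> x0 + hA \<Longrightarrow> y0 \<le> v \<Longrightarrow> v \<le> y0 + hA \<Longrightarrow>
      (u, v) \<in> U \<and> dist (A (u, v)) (A (x0, y0)) < e"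
    and nearB: "\<And>u v. x0 \<le> u \<Longrightarrow> u \<le> x0 + hB \<Longrightarrow> y0 \<le> v \<Longrightarrow> v \<le> y0 + hB \<Longrightarrow>
      (u, v) \<in> U \<and> dist (B (u, v)) (B (x0, y0)) < e"
    using continuous_on_small_square[OF U _ _ \<open>e > 0\<close>] by metis
  define h where "h = min hA hB"
  have "h > 0"
    using \<open>hA > 0\<close> \<open>hB > 0\<close> by (simp add: h_def)
  have "(u, v) \<in> U" if "x0 \<le> u" "u \<le> x0 + h" "y0 \<le> v" "v \<le> y0 + h" for u v
    using nearA[of u v] that by (simp add: h_def)
  then obtain \<xi> \<eta> \<xi>' \<eta>' where square: "x0 < \<xi>" "\<xi> < x0 + h" "y0 < \<eta>" "\<eta> < y0 + h"
    "x0 < \<xi>'" "\<xi>' < x0 + h" "y0 < \<eta>'" "\<eta>' < y0 + h"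
    and meet: "py (px f) (\<xi>, \<eta>) = px (py f) (\<xi>', \<eta>')"
    by (rule mixed_partials_meet_in_square[OF U f \<open>h > 0\<close>])
  have "dist (B (\<xi>, \<eta>)) (B p) < e" "dist (A (\<xi>', \<eta>')) (A p) < e"
    using nearB[of \<xi> \<eta>] nearA[of \<xi>' \<eta>'] square unfolding h_def p0 by simp_all
  moreover have "B (\<xi>, \<eta>) = A (\<xi>', \<eta>')"
    using meet by (simp add: A_def B_def)
  ultimately have "\<bar>A p - B p\<bar> < 2 * e"
    unfolding dist_real_def by linarith
  then show False
    by (simp add: e_def)
qed

lemma py_funpow_px_commute:
  assumes U: "open U"
  shows "Ck (Suc j) f U \<Longrightarrow> q \<in> U \<Longrightarrow> (py ^^ j) (px f) q = px ((py ^^ j) f) q"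
proof (induction j arbitrary: q)
  case (Suc j)
  have "Ck 2 ((py ^^ j) f) U"
    using Ck_py_funpow[of j 2 f U] Suc.prems(1) by simp
  have "Ck (Suc j) f U"
    using Suc.prems(1) Ck_SucD by blast
  have "(py ^^ Suc j) (px f) q = py (px ((py ^^ j) f)) q"
    using py_cong[OF U Suc.IH[OF \<open>Ck (Suc j) f U\<close>] Suc.prems(2)] by simp
  also have "\<dots> = px ((py ^^ Suc j) f) q"
    using px_py_commute[OF U \<open>Ck 2 ((py ^^ j) f) U\<close> Suc.prems(2)] by simp
  finally show ?case .
qed simp

lemma Dxy_Suc_x: "open U \<Longrightarrow> Ck (Suc j) f U \<Longrightarrow> q \<in> U \<Longrightarrow> Dxy (Suc i) j f q = Dxy i j (px f) q"
  unfolding Dxy_def funpow_Suc_right o_apply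
  by (rule px_funpow_cong[of U]) (auto intro: py_funpow_px_commute[symmetric])

lemma Dxy_Suc_y: "Dxy i (Suc j) f = Dxy i j (py f)"
  unfolding Dxy_def funpow_Suc_right o_apply ..

section \<open>Leibniz rule and Taylor coefficients\<close>

lemma sum_binomial_Suc:
  "(\<Sum>k\<le>i. real (i choose k) * (p k * q (Suc (i - k)) + p (Suc k) * q (i - k)))
   = (\<Sum>k\<le>Suc i. real (Suc i choose k) * (p k * q (Suc i - k)))" (is "?L = ?R")
proof -
  have "?R = p 0 * q (Suc i) + (\<Sum>k\<le>i. real (Suc i choose Suc k) * (p (Suc k) * q (i - k)))"
    by (subst sum.atMost_Suc_shift) simp
  also have "\<dots> = p 0 * q (Suc i) + (\<Sum>k\<le>i. real (i choose Suc k) * (p (Suc k) * q (i - k)))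
      + (\<Sum>k\<le>i. real (i choose k) * (p (Suc k) * q (i - k)))"
    by (simp add: sum.distrib[symmetric] algebra_simps)
  also have "p 0 * q (Suc i) + (\<Sum>k\<le>i. real (i choose Suc k) * (p (Suc k) * q (i - k)))
      = (\<Sum>k\<le>Suc i. real (i choose k) * (p k * q (Suc i - k)))"
    by (subst sum.atMost_Suc_shift) simp
  also have "\<dots> = (\<Sum>k\<le>i. real (i choose k) * (p k * q (Suc (i - k))))"
    by (simp add: Suc_diff_le)
  finally show ?thesis
    by (simp add: sum.distrib[symmetric] algebra_simps)
qed

lemma has_real_derivative_binomial_sum:
  assumes "\<And>k. k \<le> i \<Longrightarrow> ((\<lambda>t. P k t * Q (i - k) t) has_real_derivative
      P k x * Q (Suc (i - k)) x + P (Suc k) x * Q (i - k) x) (at x)"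
  shows "((\<lambda>t. \<Sum>k\<le>i. real (i choose k) * (P k t * Q (i - k) t)) has_real_derivative
      (\<Sum>k\<le>Suc i. real (Suc i choose k) * (P k x * Q (Suc i - k) x))) (at x)"
proof -
  have "((\<lambda>t. \<Sum>k\<le>i. real (i choose k) * (P k t * Q (i - k) t)) has_real_derivative
      (\<Sum>k\<le>i. real (i choose k) * (P k x * Q (Suc (i - k)) x + P (Suc k) x * Q (i - k) x))) (at x)"
    by (intro DERIV_sum DERIV_cmult assms) simp
  then show ?thesis
    by (simp only: sum_binomial_Suc[of i "\<lambda>k. P k x" "\<lambda>k. Q k x"])
qed

lemma px_funpow_mult:
  assumes U: "open U" and u: "Ck N u U" and w: "Ck N w U"
  shows "i \<le> N \<Longrightarrow> q \<in> U \<Longrightarrow> (px ^^ i) (\<lambda>p. u p * w p) q =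
    (\<Sum>k\<le>i. real (i choose k) * ((px ^^ k) u q * (px ^^ (i - k)) w q))"
proof (induction i arbitrary: q)
  case (Suc i)
  obtain x y where q: "q = (x, y)"
    by (cases q)
  have "(px ^^ Suc i) (\<lambda>p. u p * w p) q
      = px (\<lambda>p. \<Sum>k\<le>i. real (i choose k) * ((px ^^ k) u p * (px ^^ (i - k)) w p)) q"
    using px_cong[OF U Suc.IH Suc.prems(2)] Suc.prems by simp
  also have "\<dots> = (\<Sum>k\<le>Suc i. real (Suc i choose k) * ((px ^^ k) u q * (px ^^ (Suc i - k)) w q))"
    unfolding q using Suc.prems q
    by (intro px_eqI has_real_derivative_binomial_sum DERIV_mult'
        has_real_derivative_px_funpow[OF U u] has_real_derivative_px_funpow[OF U w]) auto
  finally show ?case .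
qed simp

lemma py_funpow_mult:
  assumes U: "open U" and u: "Ck N u U" and w: "Ck N w U"
  shows "j \<le> N \<Longrightarrow> q \<in> U \<Longrightarrow> (py ^^ j) (\<lambda>p. u p * w p) q =
    (\<Sum>k\<le>j. real (j choose k) * ((py ^^ k) u q * (py ^^ (j - k)) w q))"
proof (induction j arbitrary: q)
  case (Suc j)
  obtain x y where q: "q = (x, y)"
    by (cases q)
  have "(py ^^ Suc j) (\<lambda>p. u p * w p) q
      = py (\<lambda>p. \<Sum>k\<le>j. real (j choose k) * ((py ^^ k) u p * (py ^^ (j - k)) w p)) q"
    using py_cong[OF U Suc.IH Suc.prems(2)] Suc.prems by simp
  also have "\<dots> = (\<Sum>k\<le>Suc j. real (Suc j choose k) * ((py ^^ k) u q * (py ^^ (Suc j - k)) w q))"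
    unfolding q using Suc.prems q
    by (intro py_eqI has_real_derivative_binomial_sum DERIV_mult'
        has_real_derivative_py_funpow[OF U u] has_real_derivative_py_funpow[OF U w]) auto
  finally show ?case .
qed simp

lemma px_funpow_sum:
  assumes U: "open U" and "finite L" and F: "\<And>l. l \<in> L \<Longrightarrow> Ck N (F l) U"
  shows "i \<le> N \<Longrightarrow> q \<in> U \<Longrightarrow>
    (px ^^ i) (\<lambda>p. \<Sum>l\<in>L. c l * F l p) q = (\<Sum>l\<in>L. c l * (px ^^ i) (F l) q)"
proof (induction i arbitrary: q)
  case (Suc i)
  obtain x y where q: "q = (x, y)"
    by (cases q)
  have "(px ^^ Suc i) (\<lambda>p. \<Sum>l\<in>L. c l * F l p) q = px (\<lambda>p. \<Sum>l\<in>L. c l * (px ^^ i) (F l) p) q"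
    using px_cong[OF U Suc.IH Suc.prems(2)] Suc.prems by simp
  also have "\<dots> = (\<Sum>l\<in>L. c l * (px ^^ Suc i) (F l) q)"
    unfolding q using Suc.prems q
    by (intro px_eqI DERIV_sum DERIV_cmult has_real_derivative_px_funpow[OF U F]) auto
  finally show ?case .
qed simp

lemma px_funpow_add:
  assumes U: "open U" and f: "Ck N f U" and g: "Ck N g U"
  shows "i \<le> N \<Longrightarrow> q \<in> U \<Longrightarrow> (px ^^ i) (\<lambda>p. f p + g p) q = (px ^^ i) f q + (px ^^ i) g q"
proof (induction i arbitrary: q)
  case (Suc i)
  obtain x y where q: "q = (x, y)"
    by (cases q)
  have "(px ^^ Suc i) (\<lambda>p. f p + g p) q = px (\<lambda>p. (px ^^ i) f p + (px ^^ i) g p) q"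
    using px_cong[OF U Suc.IH Suc.prems(2)] Suc.prems by simp
  also have "\<dots> = (px ^^ Suc i) f q + (px ^^ Suc i) g q"
    unfolding q using Suc.prems q
    by (intro px_eqI DERIV_add has_real_derivative_px_funpow[OF U f] has_real_derivative_px_funpow[OF U g])
      auto
  finally show ?case .
qed simp

lemma py_funpow_add:
  assumes U: "open U" and f: "Ck N f U" and g: "Ck N g U"
  shows "j \<le> N \<Longrightarrow> q \<in> U \<Longrightarrow> (py ^^ j) (\<lambda>p. f p + g p) q = (py ^^ j) f q + (py ^^ j) g q"
proof (induction j arbitrary: q)
  case (Suc j)
  obtain x y where q: "q = (x, y)"
    by (cases q)
  have "(py ^^ Suc j) (\<lambda>p. f p + g p) q = py (\<lambda>p. (py ^^ j) f p + (py ^^ j) g p) q"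
    using py_cong[OF U Suc.IH Suc.prems(2)] Suc.prems by simp
  also have "\<dots> = (py ^^ Suc j) f q + (py ^^ Suc j) g q"
    unfolding q using Suc.prems q
    by (intro py_eqI DERIV_add has_real_derivative_py_funpow[OF U f] has_real_derivative_py_funpow[OF U g])
      auto
  finally show ?case .
qed simp

lemma Dxy_add:
  assumes U: "open U" and f: "Ck N f U" and g: "Ck N g U" and "i + j \<le> N" and q: "q \<in> U"
  shows "Dxy i j (\<lambda>p. f p + g p) q = Dxy i j f q + Dxy i j g q"
proof -
  have "Dxy i j (\<lambda>p. f p + g p) q = (px ^^ i) (\<lambda>p. (py ^^ j) f p + (py ^^ j) g p) q"
    unfolding Dxy_def using py_funpow_add[OF U f g] \<open>i + j \<le> N\<close> by (intro px_funpow_cong[OF U _ q]) auto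
  also have "\<dots> = Dxy i j f q + Dxy i j g q"
    unfolding Dxy_def using Ck_py_funpow[of j "N - j"] f g \<open>i + j \<le> N\<close>
    by (intro px_funpow_add[OF U _ _ _ q, of "N - j"]) auto
  finally show ?thesis .
qed

lemma Dxy_mult:
  assumes U: "open U" and u: "Ck N u U" and w: "Ck N w U" and ij: "i + j \<le> N" and q: "q \<in> U"
  shows "Dxy i j (\<lambda>p. u p * w p) q = (\<Sum>l\<le>j. real (j choose l) *
            (\<Sum>k\<le>i. real (i choose k) * (Dxy k l u q * Dxy (i - k) (j - l) w q)))"
proof -
  have u': "Ck (N - j) ((py ^^ l) u) U" and w': "Ck (N - j) ((py ^^ (j - l)) w) U" if "l \<le> j" for l
    using Ck_py_funpow[of l "N - l" u U] Ck_py_funpow[of "j - l" "N - (j - l)" w U] u w that ij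
    by (auto elim: Ck_mono)
  have "Dxy i j (\<lambda>p. u p * w p) q
      = (px ^^ i) (\<lambda>p. \<Sum>l\<le>j. real (j choose l) * ((py ^^ l) u p * (py ^^ (j - l)) w p)) q"
    unfolding Dxy_def using py_funpow_mult[OF U u w] ij by (intro px_funpow_cong[OF U _ q]) auto
  also have "\<dots> = (\<Sum>l\<le>j. real (j choose l) * (px ^^ i) (\<lambda>p. (py ^^ l) u p * (py ^^ (j - l)) w p) q)"
    using u' w' ij q by (intro px_funpow_sum[OF U, of _ "N - j"] Ck_mult[OF U]) auto
  also have "\<dots> = (\<Sum>l\<le>j. real (j choose l) *
            (\<Sum>k\<le>i. real (i choose k) * (Dxy k l u q * Dxy (i - k) (j - l) w q)))"
    unfolding Dxy_def using px_funpow_mult[OF U u' w' _ q] ij by simp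
  finally show ?thesis .
qed

lemma taylor_coeff_Dxy: "taylor_coeff f i j = Dxy i j f (0, 0) / (fact i * fact j)"
  by (simp add: taylor_coeff_def Dxy_def)

lemma taylor_coeff_cong:
  "open U \<Longrightarrow> (0, 0) \<in> U \<Longrightarrow> (\<And>q. q \<in> U \<Longrightarrow> f q = g q) \<Longrightarrow> taylor_coeff f i j = taylor_coeff g i j"
  unfolding taylor_coeff_Dxy using Dxy_cong by metis

lemma taylor_coeff_add:
  assumes "open U" "(0, 0) \<in> U" "Ck N f U" "Ck N g U" "i + j \<le> N"
  shows "taylor_coeff (\<lambda>q. f q + g q) i j = taylor_coeff f i j + taylor_coeff g i j"
  unfolding taylor_coeff_Dxy using Dxy_add[OF assms(1,3,4,5,2)] by (simp add: add_divide_distrib)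

lemma binomial_convolution_div_fact:
  "(\<Sum>l\<le>j. real (j choose l) * (\<Sum>k\<le>i. real (i choose k) * (A k l * B (i - k) (j - l)))) / (fact i * fact j)
   = (\<Sum>l\<le>j. \<Sum>k\<le>i. A k l / (fact k * fact l) * (B (i - k) (j - l) / (fact (i - k) * fact (j - l))))"
proof -
  have "real (n choose k) / fact n = 1 / (fact k * fact (n - k))" if "k \<le> n" for n k
    using that by (simp add: binomial_fact)
  then show ?thesis
    by (simp add: sum_divide_distrib sum_distrib_left field_simps)
qed

lemma taylor_coeff_mult:
  assumes "open U" "Ck N u U" "Ck N w U" "i + j \<le> N" "(0, 0) \<in> U"
  shows "taylor_coeff (\<lambda>p. u p * w p) i j
    = (\<Sum>l\<le>j. \<Sum>k\<le>i. taylor_coeff u k l * taylor_coeff w (i - k) (j - l))"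
  unfolding taylor_coeff_Dxy Dxy_mult[OF assms] by (rule binomial_convolution_div_fact)

lemma DERIV_mult_vanishing:
  assumes "(f has_real_derivative D) (at x)" "f x = 0" "isCont g x"
  shows "((\<lambda>t. f t * g t) has_real_derivative D * g x) (at x)"
proof -
  obtain d where d: "\<forall>t. f t - f x = d t * (t - x)" "isCont d x" "d x = D"
    using assms(1) CARAT_DERIV by blast
  show ?thesis
    unfolding CARAT_DERIV
  proof (intro exI[of _ "\<lambda>t. d t * g t"] conjI allI)
    show "f t * g t - f x * g x = d t * g t * (t - x)" for t
      using d(1)[rule_format, of t] assms(2) by simp
    show "isCont (\<lambda>t. d t * g t) x"
      using d(2) assms(3) by (intro continuous_intros)
  qed (use d(3) in simp)
qed

lemma isCont_slice_x:
  fixes G :: "real \<times> real \<Rightarrow> real"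
  assumes "continuous_on U G" "open U" "(x, y) \<in> U"
  shows "isCont (\<lambda>t. G (t, y)) x"
proof -
  have "isCont G (x, y)"
    using assms continuous_on_eq_continuous_at by blast
  then show ?thesis
    using isCont_o2[of x "\<lambda>t. (t, y)" G] by (simp add: continuous_intros)
qed

lemma has_real_derivative_Dxy_x:
  assumes "open U" "Ck N f U" "k + l < N" "(x, y) \<in> U"
  shows "((\<lambda>t. Dxy k l f (t, y)) has_real_derivative Dxy (Suc k) l f (x, y)) (at x)"
  unfolding Dxy_def
  using has_real_derivative_px_funpow[OF assms(1) Ck_py_funpow[of l "N - l" f U] _ assms(4), of k] assms(2,3)
  by simp

text \<open>For \<open>k = l = 0\<close> the second factor has used up all \<open>N\<close> derivatives of \<open>w\<close> and is merely
  continuous; the product rule survives because the first factor vanishes at the origin.\<close>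

lemma has_real_derivative_Dxy_product:
  assumes U: "open U" and O: "(0, 0) \<in> U" and u: "Ck (Suc N) u U" and w: "Ck N w U"
    and u0: "u (0, 0) = 0" and "k \<le> i" "l \<le> j" "i + j = N"
  shows "((\<lambda>t. Dxy k l u (t, 0) * Dxy (i - k) (j - l) w (t, 0)) has_real_derivative
    Dxy k l u (0, 0) * Dxy (Suc (i - k)) (j - l) w (0, 0)
      + Dxy (Suc k) l u (0, 0) * Dxy (i - k) (j - l) w (0, 0)) (at 0)"
proof -
  have du: "((\<lambda>t. Dxy k l u (t, 0)) has_real_derivative Dxy (Suc k) l u (0, 0)) (at 0)"
    using has_real_derivative_Dxy_x[OF U u _ O, of k l] assms(6-8) by simp
  show ?thesis
  proof (cases "k = 0 \<and> l = 0")
    case True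
    have "continuous_on U (Dxy (i - k) (j - l) w)"
      using Ck_Dxy[of "i - k" "j - l" 0 w U] w True assms(8) by simp
    then have "isCont (\<lambda>t. Dxy (i - k) (j - l) w (t, 0)) 0"
      using isCont_slice_x[OF _ U O] by simp
    moreover have "Dxy k l u (0, 0) = 0"
      using True u0 by (simp add: Dxy_def)
    ultimately show ?thesis
      using DERIV_mult_vanishing[OF du] by simp
  next
    case False
    have "((\<lambda>t. Dxy (i - k) (j - l) w (t, 0)) has_real_derivative Dxy (Suc (i - k)) (j - l) w (0, 0)) (at 0)"
      using has_real_derivative_Dxy_x[OF U w _ O, of "i - k" "j - l"] assms(6-8) False by auto
    then show ?thesis
      by (rule DERIV_mult'[OF du])
  qed
qed

lemma has_real_derivative_Dxy_mult_top:
  assumes U: "open U" and O: "(0, 0) \<in> U" and u: "Ck (Suc N) u U" and w: "Ck N w U"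
    and u0: "u (0, 0) = 0" and ij: "i + j = N"
  shows "((\<lambda>t. Dxy i j (\<lambda>p. u p * w p) (t, 0)) has_real_derivative fact (Suc i) * fact j *
    (\<Sum>l\<le>j. \<Sum>k\<le>Suc i. taylor_coeff u k l * taylor_coeff w (Suc i - k) (j - l))) (at 0)"
proof -
  define P where "P l k t = Dxy k l u (t, 0)" for l k t
  define Q where "Q l k t = Dxy k (j - l) w (t, 0)" for l k t
  define V where "V = (\<Sum>l\<le>j. real (j choose l) *
    (\<Sum>k\<le>Suc i. real (Suc i choose k) * (P l k 0 * Q l (Suc i - k) 0)))"
  have main: "((\<lambda>t. \<Sum>l\<le>j. real (j choose l) * (\<Sum>k\<le>i. real (i choose k) * (P l k t * Q l (i - k) t)))
     has_real_derivative V) (at 0)"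
    unfolding V_def P_def Q_def
    using has_real_derivative_Dxy_product[OF U O u w u0 _ _ ij]
    by (intro DERIV_sum DERIV_cmult has_real_derivative_binomial_sum) auto
  have expand: "Dxy i j (\<lambda>p. u p * w p) (t, 0) =
      (\<Sum>l\<le>j. real (j choose l) * (\<Sum>k\<le>i. real (i choose k) * (P l k t * Q l (i - k) t)))"
    if "t \<in> {t. (t, 0) \<in> U}" for t
    unfolding P_def Q_def using Dxy_mult[OF U Ck_SucD[OF u] w _, of i j "(t, 0)"] ij that by simp
  have "((\<lambda>t. Dxy i j (\<lambda>p. u p * w p) (t, 0)) has_real_derivative V) (at 0)"
    by (rule has_field_derivative_transform_within_open[OF main open_slice_x[OF U]])
      (use O expand in auto)
  moreover define S where
    "S = (\<Sum>l\<le>j. \<Sum>k\<le>Suc i. taylor_coeff u k l * taylor_coeff w (Suc i - k) (j - l))"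
  have "V / (fact (Suc i) * fact j) = S"
    unfolding V_def P_def Q_def S_def taylor_coeff_Dxy by (rule binomial_convolution_div_fact)
  then have "V = fact (Suc i) * fact j * S"
    by (simp add: divide_eq_eq del: fact_Suc)
  ultimately show ?thesis
    unfolding S_def by simp
qed

definition monomial2 :: "real \<Rightarrow> nat \<Rightarrow> nat \<Rightarrow> real \<times> real \<Rightarrow> real" where
  "monomial2 C p q = (\<lambda>(x, y). C * x ^ p * y ^ q)"

lemma px_monomial2: "px (monomial2 C p q) = monomial2 (C * p) (p - 1) q"
proof
  fix z :: "real \<times> real"
  obtain x y where z: "z = (x, y)"
    by (cases z)
  have "((\<lambda>t. C * t ^ p * y ^ q) has_real_derivative C * (p * x ^ (p - Suc 0)) * y ^ q) (at x)"
    by (intro DERIV_cmult_right DERIV_cmult DERIV_pow)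
  then show "px (monomial2 C p q) z = monomial2 (C * p) (p - 1) q z"
    unfolding z by (intro px_eqI) (simp add: monomial2_def algebra_simps)
qed

lemma py_monomial2: "py (monomial2 C p q) = monomial2 (C * q) p (q - 1)"
proof
  fix z :: "real \<times> real"
  obtain x y where z: "z = (x, y)"
    by (cases z)
  have "((\<lambda>t. C * x ^ p * t ^ q) has_real_derivative C * x ^ p * (q * y ^ (q - Suc 0))) (at y)"
    by (intro DERIV_cmult DERIV_pow)
  then show "py (monomial2 C p q) z = monomial2 (C * q) p (q - 1) z"
    unfolding z by (intro py_eqI) (simp add: monomial2_def algebra_simps)
qed

lemma Ck_monomial2: "Ck k (monomial2 C p q) U"
proof (induction k arbitrary: C p q)
  case 0
  show ?case
    unfolding monomial2_def by (simp add: case_prod_beta' continuous_intros)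
next
  case (Suc k)
  have "monomial2 C p q differentiable_on U"
    unfolding differentiable_on_def monomial2_def case_prod_beta'
  proof
    fix z :: "real \<times> real"
    have "fst differentiable (at z within U)" "snd differentiable (at z within U)"
      by (auto intro!: differentiableI has_derivative_fst has_derivative_snd has_derivative_ident)
    then show "(\<lambda>z. C * fst z ^ p * snd z ^ q) differentiable at z within U"
      by (intro differentiable_mult differentiable_const differentiable_power)
  qed
  then show ?case
    using Suc by (simp add: px_monomial2 py_monomial2)
qed

lemma Dxy_monomial2:
  "Dxy i j (monomial2 C p q) = monomial2 (C * (\<Prod>k<j. real (q - k)) * (\<Prod>k<i. real (p - k))) (p - i) (q - j)"
proof -
  have "(py ^^ j) (monomial2 C p q) = monomial2 (C * (\<Prod>k<j. real (q - k))) p (q - j)" for C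
    by (induction j) (simp_all add: py_monomial2 mult.assoc)
  moreover have "(px ^^ i) (monomial2 C p q) = monomial2 (C * (\<Prod>k<i. real (p - k))) (p - i) q" for C q
    by (induction i) (simp_all add: px_monomial2 mult.assoc)
  ultimately show ?thesis
    by (simp add: Dxy_def)
qed

lemma taylor_coeff_monomial2: "taylor_coeff (monomial2 C p q) i j = (if i = p \<and> j = q then C else 0)"
proof -
  have fact_prod: "(\<Prod>k<n. real (n - k)) = fact n" for n
    by (metis fact_prod_rev lessThan_atLeast0 of_nat_prod)
  have vanish: "(\<Prod>k<i. real (n - k)) = 0" if "n < i" for n i
    using that by (intro prod_zero) auto
  show ?thesis
    unfolding taylor_coeff_Dxy Dxy_monomial2
    by (cases "i < p \<or> j < q") (auto simp: monomial2_def fact_prod vanish not_less le_less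
        simp del: of_nat_diff)
qed

lemma taylor_coeff_monomial2_add:
  "taylor_coeff (\<lambda>z. monomial2 A p1 q1 z + monomial2 B p2 q2 z) i j
   = (if i = p1 \<and> j = q1 then A else 0) + (if i = p2 \<and> j = q2 then B else 0)"
proof -
  have "taylor_coeff (\<lambda>z. monomial2 A p1 q1 z + monomial2 B p2 q2 z) i j
      = taylor_coeff (monomial2 A p1 q1) i j + taylor_coeff (monomial2 B p2 q2) i j"
    by (rule taylor_coeff_add[OF open_UNIV UNIV_I Ck_monomial2 Ck_monomial2 order_refl])
  then show ?thesis
    by (simp add: taylor_coeff_monomial2)
qed

section \<open>The obstruction for \<open>C\<^sup>k\<close> solutions\<close>

lemma taylor_coeff_px:
  assumes "open U" "(0, 0) \<in> U" "Ck (Suc j) f U"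
  shows "taylor_coeff (px f) i j = real (Suc i) * taylor_coeff f (Suc i) j"
  using Dxy_Suc_x[OF assms(1,3,2), of i] by (simp add: taylor_coeff_Dxy field_simps del: of_nat_Suc)

lemma taylor_coeff_py: "taylor_coeff (py f) i j = real (Suc j) * taylor_coeff f i (Suc j)"
  by (simp add: taylor_coeff_Dxy Dxy_Suc_y field_simps del: of_nat_Suc)

lemma px_sum_squares:
  assumes U: "open U" and z: "Ck 2 z U" and eq: "\<forall>p\<in>U. (px z p)\<^sup>2 + (py z p)\<^sup>2 = h p" and "q \<in> U"
  shows "px h q = 2 * (px z q * px (px z) q + py z q * px (py z) q)"
proof -
  obtain x y where q: "q = (x, y)"
    by (cases q)
  have "px z differentiable_on U" "py z differentiable_on U"
    using z by (simp_all add: numeral_2_eq_2)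
  then have "((\<lambda>t. (px z (t, y))\<^sup>2 + (py z (t, y))\<^sup>2) has_real_derivative
      2 * (px z q * px (px z) q + py z q * px (py z) q)) (at x)"
    using \<open>q \<in> U\<close> U unfolding q power2_eq_square
    by (auto intro!: derivative_eq_intros has_real_derivative_px simp: algebra_simps)
  moreover have "px h q = px (\<lambda>p. (px z p)\<^sup>2 + (py z p)\<^sup>2) q"
    using eq \<open>q \<in> U\<close> by (intro px_cong[OF U]) auto
  ultimately show ?thesis
    unfolding q by (simp add: px_eqI)
qed

lemma py_sum_squares:
  assumes U: "open U" and z: "Ck 2 z U" and eq: "\<forall>p\<in>U. (px z p)\<^sup>2 + (py z p)\<^sup>2 = h p" and "q \<in> U"
  shows "py h q = 2 * (px z q * py (px z) q + py z q * py (py z) q)"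
proof -
  obtain x y where q: "q = (x, y)"
    by (cases q)
  have "px z differentiable_on U" "py z differentiable_on U"
    using z by (simp_all add: numeral_2_eq_2)
  then have "((\<lambda>t. (px z (x, t))\<^sup>2 + (py z (x, t))\<^sup>2) has_real_derivative
      2 * (px z q * py (px z) q + py z q * py (py z) q)) (at y)"
    using \<open>q \<in> U\<close> U unfolding q power2_eq_square
    by (auto intro!: derivative_eq_intros has_real_derivative_py simp: algebra_simps)
  moreover have "py h q = py (\<lambda>p. (px z p)\<^sup>2 + (py z p)\<^sup>2) q"
    using eq \<open>q \<in> U\<close> by (intro py_cong[OF U]) auto
  ultimately show ?thesis
    unfolding q by (simp add: py_eqI)
qed

locale taylor_gradient =
  fixes z :: "real \<times> real \<Rightarrow> real" and U :: "(real \<times> real) set" and N :: nat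
  assumes U: "open U" and origin: "(0, 0) \<in> U" and smooth: "Ck (Suc (Suc N)) z U"
begin

definition P :: fps2 where
  "P = fps2_of (taylor_coeff (px z))"

definition Q :: fps2 where
  "Q = fps2_of (taylor_coeff (py z))"

lemma coeff2_P [simp]: "coeff2 P i j = taylor_coeff (px z) i j"
  by (simp add: P_def)

lemma coeff2_Q [simp]: "coeff2 Q i j = taylor_coeff (py z) i j"
  by (simp add: Q_def)

lemma Ck_px: "Ck (Suc N) (px z) U" and Ck_py: "Ck (Suc N) (py z) U"
  using smooth by simp_all

lemma Ck_second_partials: "Ck N (px (px z)) U" "Ck N (py (px z)) U" "Ck N (px (py z)) U" "Ck N (py (py z)) U"
  using smooth by simp_all

lemma px_py_z_commute: "q \<in> U \<Longrightarrow> px (py z) q = py (px z) q"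
  using px_py_commute[OF U Ck_mono[OF smooth]] by simp

lemma taylor_coeff_px_py_z_commute: "taylor_coeff (px (py z)) i j = taylor_coeff (py (px z)) i j"
  using px_py_z_commute by (rule taylor_coeff_cong[OF U origin])

lemma coeff2_fps2_dx_P: "i + j \<le> N \<Longrightarrow> coeff2 (fps2_dx P) i j = taylor_coeff (px (px z)) i j"
  using taylor_coeff_px[OF U origin Ck_mono[OF Ck_px], of j i] by (simp add: P_def)

lemma coeff2_fps2_dx_Q: "i + j \<le> N \<Longrightarrow> coeff2 (fps2_dx Q) i j = taylor_coeff (py (px z)) i j"
  using taylor_coeff_px[OF U origin Ck_mono[OF Ck_py], of j i] taylor_coeff_px_py_z_commute
  by (simp add: Q_def)

lemma coeff2_fps2_dy_P: "coeff2 (fps2_dy P) i j = taylor_coeff (px (py z)) i j"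
  by (simp add: P_def taylor_coeff_py taylor_coeff_px_py_z_commute)

lemma coeff2_fps2_dy_Q: "coeff2 (fps2_dy Q) i j = taylor_coeff (py (py z)) i j"
  by (simp add: Q_def taylor_coeff_py)

lemma coeff2_lie_P:
  assumes "p + q \<le> N"
  shows "coeff2 (lie_deriv P Q P) p q
    = taylor_coeff (\<lambda>x. px z x * px (px z) x + py z x * px (py z) x) p q"
proof -
  have "coeff2 (P * fps2_dx P) p q
      = (\<Sum>l\<le>q. \<Sum>k\<le>p. taylor_coeff (px z) k l * taylor_coeff (px (px z)) (p - k) (q - l))"
    unfolding coeff2_mult using assms
    by (intro sum.cong refl) (auto simp: coeff2_fps2_dx_P simp del: coeff2_fps2_dx)
  also have "\<dots> = taylor_coeff (\<lambda>x. px z x * px (px z) x) p q"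
    using Ck_mono[OF Ck_px] Ck_second_partials by (intro taylor_coeff_mult[symmetric, OF U _ _ assms origin]) auto
  finally have "coeff2 (P * fps2_dx P) p q = taylor_coeff (\<lambda>x. px z x * px (px z) x) p q" .
  moreover have "coeff2 (Q * fps2_dy P) p q = taylor_coeff (\<lambda>x. py z x * px (py z) x) p q"
    unfolding coeff2_mult coeff2_fps2_dy_P
    using Ck_mono[OF Ck_py] Ck_second_partials by (simp add: taylor_coeff_mult[OF U _ _ assms origin])
  ultimately show ?thesis
    using Ck_mono[OF Ck_px] Ck_mono[OF Ck_py] Ck_second_partials
    by (simp add: lie_deriv_def taylor_coeff_add[OF U origin Ck_mult[OF U] Ck_mult[OF U] assms])
qed

lemma coeff2_lie_Q:
  assumes "p + q \<le> N"
  shows "coeff2 (lie_deriv P Q Q) p q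
    = taylor_coeff (\<lambda>x. px z x * py (px z) x + py z x * py (py z) x) p q"
proof -
  have "coeff2 (P * fps2_dx Q) p q
      = (\<Sum>l\<le>q. \<Sum>k\<le>p. taylor_coeff (px z) k l * taylor_coeff (py (px z)) (p - k) (q - l))"
    unfolding coeff2_mult using assms
    by (intro sum.cong refl) (auto simp: coeff2_fps2_dx_Q simp del: coeff2_fps2_dx)
  also have "\<dots> = taylor_coeff (\<lambda>x. px z x * py (px z) x) p q"
    using Ck_mono[OF Ck_px] Ck_second_partials by (intro taylor_coeff_mult[symmetric, OF U _ _ assms origin]) auto
  finally have "coeff2 (P * fps2_dx Q) p q = taylor_coeff (\<lambda>x. px z x * py (px z) x) p q" .
  moreover have "coeff2 (Q * fps2_dy Q) p q = taylor_coeff (\<lambda>x. py z x * py (py z) x) p q"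
    unfolding coeff2_mult coeff2_fps2_dy_Q
    using Ck_mono[OF Ck_py] Ck_second_partials by (simp add: taylor_coeff_mult[OF U _ _ assms origin])
  ultimately show ?thesis
    using Ck_mono[OF Ck_px] Ck_mono[OF Ck_py] Ck_second_partials
    by (simp add: lie_deriv_def taylor_coeff_add[OF U origin Ck_mult[OF U] Ck_mult[OF U] assms])
qed

lemma taylor_coeff_top_convolution:
  assumes "px z (0, 0) = 0" "py z (0, 0) = 0" "i + j = N"
  shows "taylor_coeff (\<lambda>x. px z x * py (px z) x + py z x * py (py z) x) (Suc i) j
    = (\<Sum>l\<le>j. \<Sum>k\<le>Suc i. taylor_coeff (px z) k l * taylor_coeff (py (px z)) (Suc i - k) (j - l))
      + (\<Sum>l\<le>j. \<Sum>k\<le>Suc i. taylor_coeff (py z) k l * taylor_coeff (py (py z)) (Suc i - k) (j - l))"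
    (is "taylor_coeff ?F _ _ = ?S1 + ?S2")
proof -
  let ?F1 = "\<lambda>x. px z x * py (px z) x" and ?F2 = "\<lambda>x. py z x * py (py z) x"
  have sum_deriv: "((\<lambda>t. Dxy i j ?F1 (t, 0) + Dxy i j ?F2 (t, 0))
      has_real_derivative fact (Suc i) * fact j * ?S1 + fact (Suc i) * fact j * ?S2) (at 0)"
    using has_real_derivative_Dxy_mult_top[OF U origin Ck_px Ck_second_partials(2) assms(1,3)]
      has_real_derivative_Dxy_mult_top[OF U origin Ck_py Ck_second_partials(4) assms(2,3)]
    by (rule DERIV_add)
  have split: "Dxy i j ?F (t, 0) = Dxy i j ?F1 (t, 0) + Dxy i j ?F2 (t, 0)"
    if "t \<in> {t. (t, 0) \<in> U}" for t
  proof (rule Dxy_add[OF U])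
    show "Ck N ?F1 U" "Ck N ?F2 U"
      using Ck_mono[OF Ck_px] Ck_mono[OF Ck_py] Ck_second_partials by (intro Ck_mult[OF U]; simp)+
  qed (use that assms(3) in simp_all)
  have "((\<lambda>t. Dxy i j ?F (t, 0)) has_real_derivative
      fact (Suc i) * fact j * ?S1 + fact (Suc i) * fact j * ?S2) (at 0)"
    by (rule has_field_derivative_transform_within_open[OF sum_deriv open_slice_x[OF U]])
      (use origin split in auto)
  then have "Dxy (Suc i) j ?F (0, 0) = fact (Suc i) * fact j * (?S1 + ?S2)"
    unfolding Dxy_def funpow.simps(2) o_apply distrib_left by (rule px_eqI)
  then have "taylor_coeff ?F (Suc i) j = fact (Suc i) * fact j * (?S1 + ?S2) / (fact (Suc i) * fact j)"
    by (simp only: taylor_coeff_Dxy)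
  then show ?thesis
    by (simp del: fact_Suc)
qed

lemma coeff2_lie_Q_top:
  assumes "px z (0, 0) = 0" "py z (0, 0) = 0" "i + j = N"
  shows "coeff2 (lie_deriv P Q Q) (Suc i) j
    = taylor_coeff (\<lambda>x. px z x * py (px z) x + py z x * py (py z) x) (Suc i) j"
proof -
  have "taylor_coeff (px z) k l * coeff2 (fps2_dx Q) (Suc i - k) (j - l)
      = taylor_coeff (px z) k l * taylor_coeff (py (px z)) (Suc i - k) (j - l)"
    if "l \<le> j" "k \<le> Suc i" for k l
  proof (cases "k = 0 \<and> l = 0")
    case True
    then show ?thesis
      using assms(1) by (simp add: taylor_coeff_Dxy Dxy_def)
  next
    case False
    then have "Suc i - k + (j - l) \<le> N"
      using that assms(3) by auto
    then show ?thesis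
      by (simp add: coeff2_fps2_dx_Q del: coeff2_fps2_dx)
  qed
  then have "coeff2 (P * fps2_dx Q) (Suc i) j
      = (\<Sum>l\<le>j. \<Sum>k\<le>Suc i. taylor_coeff (px z) k l * taylor_coeff (py (px z)) (Suc i - k) (j - l))"
    unfolding coeff2_mult coeff2_P by (intro sum.cong refl) auto
  moreover have "coeff2 (Q * fps2_dy Q) (Suc i) j
      = (\<Sum>l\<le>j. \<Sum>k\<le>Suc i. taylor_coeff (py z) k l * taylor_coeff (py (py z)) (Suc i - k) (j - l))"
    unfolding coeff2_mult coeff2_Q coeff2_fps2_dy_Q ..
  ultimately show ?thesis
    unfolding lie_deriv_def coeff2_add taylor_coeff_top_convolution[OF assms] by (rule arg_cong2[where f = "(+)"])
qed

lemma low_order_taylor: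
  assumes "\<forall>i j. i + j \<le> 2 \<longrightarrow> taylor_coeff z i j = z_low a b i j"
  shows "ord_ge 2 (P - fps2_const a * fps2_X)" "ord_ge 2 (Q + fps2_const b * fps2_Y)"
    and "px z (0, 0) = 0" "py z (0, 0) = 0"
proof -
  have "taylor_coeff (px z) i j = real (Suc i) * taylor_coeff z (Suc i) j" if "j \<le> 1" for i j
    using that by (intro taylor_coeff_px[OF U origin Ck_mono[OF smooth]]) auto
  then have "taylor_coeff (px z) 0 0 = 0" "taylor_coeff (px z) 1 0 = a" "taylor_coeff (px z) 0 1 = 0"
    and "taylor_coeff (py z) 0 0 = 0" "taylor_coeff (py z) 1 0 = 0" "taylor_coeff (py z) 0 1 = - b"
    using assms by (auto simp: taylor_coeff_py z_low_def numeral_2_eq_2)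
  then show "ord_ge 2 (P - fps2_const a * fps2_X)" "ord_ge 2 (Q + fps2_const b * fps2_Y)"
    and "px z (0, 0) = 0" "py z (0, 0) = 0"
    by (auto simp: ord_ge_def less_Suc_eq numeral_2_eq_2 add_is_1 taylor_coeff_Dxy Dxy_def)
qed

end

definition eikonal_rhs :: "real \<Rightarrow> real \<Rightarrow> real \<Rightarrow> nat \<Rightarrow> nat \<Rightarrow> real \<times> real \<Rightarrow> real" where
  "eikonal_rhs a b c m n = (\<lambda>(x, y). a\<^sup>2 * x\<^sup>2 + b\<^sup>2 * y\<^sup>2 + c * x ^ m * y ^ n)"

lemma eikonal_rhs_monomial2:
  "eikonal_rhs a b c m n = (\<lambda>q. (monomial2 (a\<^sup>2) 2 0 q + monomial2 (b\<^sup>2) 0 2 q) + monomial2 c m n q)"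
  by (auto simp: eikonal_rhs_def monomial2_def)

lemma smooth_eikonal_rhs: "smooth_on (eikonal_rhs a b c m n) UNIV"
  unfolding smooth_on_def eikonal_rhs_monomial2 by (intro allI Ck_add open_UNIV Ck_monomial2)

lemma taylor_coeff_eikonal_rhs:
  assumes "3 \<le> m + n" "i + j \<le> 2"
  shows "taylor_coeff (eikonal_rhs a b c m n) i j = h_low a b i j"
proof -
  have "taylor_coeff (eikonal_rhs a b c m n) i j
      = taylor_coeff (\<lambda>q. monomial2 (a\<^sup>2) 2 0 q + monomial2 (b\<^sup>2) 0 2 q) i j
        + taylor_coeff (monomial2 c m n) i j"
    unfolding eikonal_rhs_monomial2
    by (rule taylor_coeff_add[OF open_UNIV UNIV_I Ck_add[OF open_UNIV Ck_monomial2 Ck_monomial2]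
          Ck_monomial2 order_refl])
  then show ?thesis
    using assms by (auto simp: taylor_coeff_monomial2_add taylor_coeff_monomial2 h_low_def)
qed

lemma px_eikonal_rhs:
  "px (eikonal_rhs a b c m n) q = 2 * (monomial2 (a\<^sup>2) 1 0 q + monomial2 (c * m / 2) (m - 1) n q)"
proof (cases q)
  case (Pair x y)
  have "((\<lambda>t. a\<^sup>2 * t\<^sup>2 + b\<^sup>2 * y\<^sup>2 + c * t ^ m * y ^ n) has_real_derivative
      2 * (a\<^sup>2 * x + c * m / 2 * x ^ (m - 1) * y ^ n)) (at x)"
    by (auto intro!: derivative_eq_intros simp: algebra_simps)
  then show ?thesis
    unfolding Pair eikonal_rhs_def by (intro px_eqI) (simp add: monomial2_def)
qed

lemma py_eikonal_rhs:
  "py (eikonal_rhs a b c m n) q = 2 * (monomial2 (b\<^sup>2) 0 1 q + monomial2 (c * n / 2) m (n - 1) q)"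
proof (cases q)
  case (Pair x y)
  have "((\<lambda>t. a\<^sup>2 * x\<^sup>2 + b\<^sup>2 * t\<^sup>2 + c * x ^ m * t ^ n) has_real_derivative
      2 * (b\<^sup>2 * y + c * n / 2 * x ^ m * y ^ (n - 1))) (at y)"
    by (auto intro!: derivative_eq_intros simp: algebra_simps)
  then show ?thesis
    unfolding Pair eikonal_rhs_def by (intro py_eqI) (simp add: monomial2_def)
qed

lemma taylor_coeff_eikonal_x:
  assumes U: "open U" and "(0, 0) \<in> U" and z: "Ck 2 z U"
    and eq: "\<forall>p\<in>U. (px z p)\<^sup>2 + (py z p)\<^sup>2 = eikonal_rhs a b c m n p"
  shows "taylor_coeff (\<lambda>x. px z x * px (px z) x + py z x * px (py z) x) p q
    = (if p = 1 \<and> q = 0 then a\<^sup>2 else 0) + (if p = m - 1 \<and> q = n then c * m / 2 else 0)"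
proof -
  have "taylor_coeff (\<lambda>x. px z x * px (px z) x + py z x * px (py z) x) p q
    = taylor_coeff (\<lambda>x. monomial2 (a\<^sup>2) 1 0 x + monomial2 (c * m / 2) (m - 1) n x) p q"
    using px_sum_squares[OF U z eq] px_eikonal_rhs[of a b c m n]
    by (intro taylor_coeff_cong[OF U assms(2)]) (metis mult_left_cancel zero_neq_numeral)
  then show ?thesis
    by (simp only: taylor_coeff_monomial2_add)
qed

lemma taylor_coeff_eikonal_y:
  assumes U: "open U" and "(0, 0) \<in> U" and z: "Ck 2 z U"
    and eq: "\<forall>p\<in>U. (px z p)\<^sup>2 + (py z p)\<^sup>2 = eikonal_rhs a b c m n p"
  shows "taylor_coeff (\<lambda>x. px z x * py (px z) x + py z x * py (py z) x) p q
    = (if p = 0 \<and> q = 1 then b\<^sup>2 else 0) + (if p = m \<and> q = n - 1 then c * n / 2 else 0)"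
proof -
  have "taylor_coeff (\<lambda>x. px z x * py (px z) x + py z x * py (py z) x) p q
    = taylor_coeff (\<lambda>x. monomial2 (b\<^sup>2) 0 1 x + monomial2 (c * n / 2) m (n - 1) x) p q"
    using py_sum_squares[OF U z eq] py_eikonal_rhs[of a b c m n]
    by (intro taylor_coeff_cong[OF U assms(2)]) (metis mult_left_cancel zero_neq_numeral)
  then show ?thesis
    by (simp only: taylor_coeff_monomial2_add)
qed

theorem no_Ck_solution:
  fixes a b c :: real and m n :: nat and z :: "real \<times> real \<Rightarrow> real" and U :: "(real \<times> real) set"
  assumes "a > 0" "b > 0" "m > 0" "n > 0" "real m * a = real n * b" "c \<noteq> 0"
    and "open U" "(0, 0) \<in> U" "Ck (m + n) z U"
    and low: "\<forall>i j. i + j \<le> 2 \<longrightarrow> taylor_coeff z i j = z_low a b i j"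
    and eq: "\<forall>p\<in>U. (px z p)\<^sup>2 + (py z p)\<^sup>2 = eikonal_rhs a b c m n p"
  shows False
proof -
  define N where "N = m + n - 2"
  have N: "m + n = Suc (Suc N)"
    using assms(3,4) by (simp add: N_def)
  interpret taylor_gradient z U N
    using assms(7-9) N by unfold_locales simp_all
  note linear = low_order_taylor[OF low]
  have z2: "Ck 2 z U"
    using smooth by (rule Ck_mono) simp
  interpret resonant_eikonal a b m n P Q
  proof unfold_locales
    show "ord_ge (m + n - 1) (lie_deriv P Q P - fps2_const (a\<^sup>2) * fps2_X)"
      using N by (auto simp: ord_ge_def coeff2_lie_P taylor_coeff_eikonal_x[OF U origin z2 eq])
    show "ord_ge (m + n - 1) (lie_deriv P Q Q - fps2_const (b\<^sup>2) * fps2_Y)"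
      using N by (auto simp: ord_ge_def coeff2_lie_Q taylor_coeff_eikonal_y[OF U origin z2 eq])
  qed (use assms linear in auto)
  have "coeff2 (lie_deriv P Q Q) m (n - 1) = c * n / 2"
    using coeff2_lie_Q_top[OF linear(3,4), of "m - 1" "n - 1"] taylor_coeff_eikonal_y[OF U origin z2 eq]
      N assms(3,4) by simp
  then show False
    using coeff2_lie_Q_resonant assms(4,6) by simp
qed

lemma rational_dependence_resonance:
  fixes a b :: real
  assumes "a > 0" "b > 0" "\<exists>p q :: rat. (p, q) \<noteq> (0, 0) \<and> of_rat p * a + of_rat q * b = 0"
  shows "\<exists>m n :: nat. m > 0 \<and> n > 0 \<and> real m * a - real n * b = 0 \<and> m + n \<ge> 3"
proof -
  obtain p q :: rat where pq: "(p, q) \<noteq> (0, 0)" "of_rat p * a + of_rat q * b = 0"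
    using assms(3) by blast
  have "p \<noteq> 0"
    using pq assms(2) by auto
  define r where "r = - q / p"
  have ar: "a = of_rat r * b"
    using pq(2) \<open>p \<noteq> 0\<close> by (simp add: r_def of_rat_divide of_rat_minus field_simps)
  obtain s1 s2 where s: "quotient_of r = (s1, s2)"
    by (cases "quotient_of r")
  have "s2 > 0"
    using quotient_of_denom_pos[OF s] .
  have r: "(of_rat r :: real) = of_int s1 / of_int s2"
    using quotient_of_div[OF s] by (simp add: of_rat_divide)
  have "of_rat r > (0::real)"
    using ar assms(1,2) by (simp add: zero_less_mult_iff)
  then have "s1 > 0"
    using \<open>s2 > 0\<close> r by (simp add: zero_less_divide_iff)
  have "real_of_int s2 * a = real_of_int s1 * b"
    using ar r \<open>s2 > 0\<close> by (simp add: field_simps)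
  then show ?thesis
    using \<open>s1 > 0\<close> \<open>s2 > 0\<close>
    by (intro exI[of _ "2 * nat s2"] exI[of _ "2 * nat s1"]) (auto simp: algebra_simps)
qed

corollary no_local_Ck_solution:
  assumes "a > 0" "b > 0" "m > 0" "n > 0" "real m * a - real n * b = 0" "c \<noteq> 0" "m + n \<le> k"
  shows "\<not> (\<exists>U z. open U \<and> (0, 0) \<in> U \<and> Ck k z U
    \<and> (\<forall>i j. i + j \<le> 2 \<longrightarrow> taylor_coeff z i j = z_low a b i j)
    \<and> (\<forall>p\<in>U. (px z p)\<^sup>2 + (py z p)\<^sup>2 = eikonal_rhs a b c m n p))"
proof
  assume "\<exists>U z. open U \<and> (0, 0) \<in> U \<and> Ck k z U
    \<and> (\<forall>i j. i + j \<le> 2 \<longrightarrow> taylor_coeff z i j = z_low a b i j)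
    \<and> (\<forall>p\<in>U. (px z p)\<^sup>2 + (py z p)\<^sup>2 = eikonal_rhs a b c m n p)"
  then obtain U z where "open U" "(0, 0) \<in> U" "Ck k z U"
    "\<forall>i j. i + j \<le> 2 \<longrightarrow> taylor_coeff z i j = z_low a b i j"
    "\<forall>p\<in>U. (px z p)\<^sup>2 + (py z p)\<^sup>2 = eikonal_rhs a b c m n p"
    by blast
  then show False
    using no_Ck_solution[of a b m n c U z] Ck_mono[of k z U "m + n"] assms by simp
qed

corollary smooth_rhs_without_smooth_solution:
  assumes "a > 0" "b > 0" "m > 0" "n > 0" "real m * a - real n * b = 0" "m + n \<ge> 3"
  shows "\<exists>h. smooth_on h UNIV
    \<and> (\<forall>i j. i + j \<le> 2 \<longrightarrow> taylor_coeff h i j = h_low a b i j)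
    \<and> \<not> (\<exists>U z. open U \<and> (0, 0) \<in> U \<and> smooth_on z U
      \<and> (\<forall>i j. i + j \<le> 2 \<longrightarrow> taylor_coeff z i j = z_low a b i j)
      \<and> (\<forall>p\<in>U. (px z p)\<^sup>2 + (py z p)\<^sup>2 = h p))"
proof (intro exI conjI allI impI)
  show "smooth_on (eikonal_rhs a b 1 m n) UNIV"
    by (rule smooth_eikonal_rhs)
  show "taylor_coeff (eikonal_rhs a b 1 m n) i j = h_low a b i j" if "i + j \<le> 2" for i j
    using assms(6) that by (rule taylor_coeff_eikonal_rhs)
  show "\<not> (\<exists>U z. open U \<and> (0, 0) \<in> U \<and> smooth_on z U
      \<and> (\<forall>i j. i + j \<le> 2 \<longrightarrow> taylor_coeff z i j = z_low a b i j)
      \<and> (\<forall>p\<in>U. (px z p)\<^sup>2 + (py z p)\<^sup>2 = eikonal_rhs a b 1 m n p))"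
    using no_local_Ck_solution[OF assms(1-5) one_neq_zero order_refl]
    unfolding smooth_on_def by blast
qed

corollary resonant_rhs_no_solution:
  assumes "a > 0" "b > 0" "m > 0" "n > 0" "real m * a - real n * b = 0" "c \<noteq> 0"
  shows "let h = (\<lambda>(x, y). a^2 * x^2 + b^2 * y^2 + c * x^m * y^n);
      hc = (\<lambda>i j. if (i, j) = (m, n) then c else h_low a b i j)
    in \<not> (\<exists>zc. (\<forall>i j. i + j \<le> 2 \<longrightarrow> zc i j = z_low a b i j)
        \<and> (\<forall>p q. conv2 (fdx zc) (fdx zc) p q + conv2 (fdy zc) (fdy zc) p q = hc p q))
      \<and> (\<forall>k. k \<ge> m + n \<longrightarrow>
        \<not> (\<exists>U z. open U \<and> (0, 0) \<in> U \<and> Ck k z U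
          \<and> (\<forall>i j. i + j \<le> 2 \<longrightarrow> taylor_coeff z i j = z_low a b i j)
          \<and> (\<forall>p\<in>U. (px z p)^2 + (py z p)^2 = h p)))"
  using no_formal_solution[of a b m n c] no_local_Ck_solution[of a b m n c] assms
  by (simp add: Let_def eikonal_rhs_def)

theorem theorem4p4:
  fixes a b :: real
  assumes "a > 0" and "b > 0"
    and "\<exists>p q :: rat. (p, q) \<noteq> (0, 0) \<and> of_rat p * a + of_rat q * b = 0"
  shows "(\<exists>h. smooth_on h UNIV
            \<and> (\<forall>i j. i + j \<le> 2 \<longrightarrow> taylor_coeff h i j = h_low a b i j)
            \<and> \<not> (\<exists>U z. open U \<and> (0, 0) \<in> U \<and> smooth_on z U
                   \<and> (\<forall>i j. i + j \<le> 2 \<longrightarrow> taylor_coeff z i j = z_low a b i j)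
                   \<and> (\<forall>p\<in>U. (px z p)^2 + (py z p)^2 = h p)))
       \<and> (\<forall>(m::nat) (n::nat) (c::real).
            m > 0 \<longrightarrow> n > 0 \<longrightarrow> real m * a - real n * b = 0 \<longrightarrow> m + n \<ge> 4 \<longrightarrow> c \<noteq> 0 \<longrightarrow>
            (let h = (\<lambda>(x, y). a^2 * x^2 + b^2 * y^2 + c * x^m * y^n);
                 hc = (\<lambda>i j. if (i, j) = (m, n) then c else h_low a b i j)
             in \<not> (\<exists>zc. (\<forall>i j. i + j \<le> 2 \<longrightarrow> zc i j = z_low a b i j)
                       \<and> (\<forall>p q. conv2 (fdx zc) (fdx zc) p q + conv2 (fdy zc) (fdy zc) p q = hc p q))
                \<and> (\<forall>k. k \<ge> m + n \<longrightarrow>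
                     \<not> (\<exists>U z. open U \<and> (0, 0) \<in> U \<and> Ck k z U
                          \<and> (\<forall>i j. i + j \<le> 2 \<longrightarrow> taylor_coeff z i j = z_low a b i j)
                          \<and> (\<forall>p\<in>U. (px z p)^2 + (py z p)^2 = h p)))))"
proof -
  obtain m n where mn: "m > 0" "n > 0" "real m * a - real n * b = 0" "m + n \<ge> 3"
    using rational_dependence_resonance[OF assms] by blast
  then show ?thesis
    using smooth_rhs_without_smooth_solution[OF assms(1,2) mn(1-3)] resonant_rhs_no_solution[OF assms(1,2)]
    by blast
qed

end
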